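(* Let $\boldsymbol{X}_0\in\mathbb{R}^{n\times n}$ be a PSD matrix of rank $r$ with eigendecomposition $\boldsymbol{X}_0=\boldsymbol{U}\boldsymbol{\Lambda}\boldsymbol{U}^T$, $\boldsymbol{U}\in\mathbb{R}^{n\times r}$ with orthonormal columns. Let $\boldsymbol{a}_1,\dots,\boldsymbol{a}_m\in\mathbb{R}^n$, let $\mathcal{A}(\boldsymbol{X})=\{\boldsymbol{a}_i^T\boldsymbol{X}\boldsymbol{a}_i\}_{i=1}^m$, and for $\mathcal{S}\subseteq\{1,\dots,m\}$ let $\mathcal{A}_{\mathcal{S}}(\boldsymbol{X})=\{\boldsymbol{a}_i^T\boldsymbol{X}\boldsymbol{a}_i\}_{i\in\mathcal{S}}$ and $\mathcal{S}^\perp=\{1,\dots,m\}\setminus\mathcal{S}$. Let $\boldsymbol{z}=\mathcal{A}(\boldsymbol{X}_0)+\boldsymbol{\beta}+\boldsymbol{w}$ with $\|\boldsymbol{w}\|_1\le\epsilon$, and let $\hat{\boldsymbol{X}}$ be a solution to $\min_{\boldsymbol{X}\succeq 0}\|\boldsymbol{z}-\mathcal{A}(\boldsymbol{X})\|_1$. Let $0<s_0<1$ be a constant and let $\mathcal{S}\subseteq\{1,\dots,m\}$ be a subset with $|\mathcal{S}|/m=\frac{s_0}{13\sqrt{2r}}$ and $\mathrm{supp}(\boldsymbol{\beta})\subseteq\mathcal{S}$. Suppose that for all symmetric matrices $\boldsymbol{X}$, $$\frac{1}{m}\|\mathcal{A}(\boldsymbol{X})\|_1\le\Big(1+\frac{1}{10}\Big)\|\boldsymbol{X}\|_1,\qquad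 \frac{1}{|\mathcal{S}|}\|\mathcal{A}_{\mathcal{S}}(\boldsymbol{X})\|_1\le\Big(1+\frac{1}{10}\Big)\|\boldsymbol{X}\|_1,$$ and for all $\boldsymbol{X}\in T$, $$\frac{1}{|\mathcal{S}^\perp|}\|\mathcal{A}_{\mathcal{S}^\perp}(\boldsymbol{X})\|_1>\frac{1}{5}\Big(1-\frac{1}{12}\Big)\|\boldsymbol{X}\|_{\mathrm{F}}.$$ If there exists $\boldsymbol{\mu}\in\mathbb{R}^m$ such that $\boldsymbol{Y}=\mathcal{A}^*(\boldsymbol{\mu})=\sum_{i=1}^m\mu_i\boldsymbol{a}_i\boldsymbol{a}_i^T$ satisfies $$\mathcal{P}_{T^\perp}(\boldsymbol{Y})\preceq-\frac{1}{r}\mathcal{P}_{T^\perp}(\boldsymbol{I}),\qquad \|\mathcal{P}_T(\boldsymbol{Y})\|_{\mathrm{F}}\le\frac{1}{13r},$$ and $\mu_i=\frac{9}{m}\mathrm{sgn}(\beta_i)$ for $i\in\mathrm{supp}(\boldsymbol{\beta})$, $|\mu_i|\le\frac{9}{m}$ for $i\notin\mathrm{supp}(\boldsymbol{\beta})$, then $$\|\hat{\boldsymbol{X}}-\boldsymbol{X}_0\|_{\mathrm{F}}\le c\,\frac{r\epsilon}{m},$$ where $c$ is a constant.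
   Context: For a matrix $\boldsymbol{X}$, $\|\boldsymbol{X}\|_1$ denotes the nuclear norm and $\|\boldsymbol{X}\|_{\mathrm{F}}$ the Frobenius norm. $T=\{\boldsymbol{U}\boldsymbol{Z}^T+\boldsymbol{Z}\boldsymbol{U}^T:\boldsymbol{Z}\in\mathbb{R}^{n\times r}\}$ is the symmetric tangent space at $\boldsymbol{X}_0$; $\mathcal{P}_T$ is the orthogonal projection onto $T$ and $\mathcal{P}_{T^\perp}(\boldsymbol{H})=\boldsymbol{H}-\mathcal{P}_T(\boldsymbol{H})=(\boldsymbol{I}-\boldsymbol{U}\boldsymbol{U}^T)\boldsymbol{H}(\boldsymbol{I}-\boldsymbol{U}\boldsymbol{U}^T)$ for symmetric $\boldsymbol{H}$. $\mathrm{sgn}$ is the sign function and $\preceq$ is the Loewner order. *)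

theory Defs
  imports "Jordan_Normal_Form.Jordan_Normal_Form"
begin

definition sym_mat :: "nat \<Rightarrow> real mat \<Rightarrow> bool" where
  "sym_mat n X \<longleftrightarrow> X \<in> carrier_mat n n \<and> transpose_mat X = X"

definition psd_mat :: "nat \<Rightarrow> real mat \<Rightarrow> bool" where
  "psd_mat n X \<longleftrightarrow> sym_mat n X \<and> (\<forall>v \<in> carrier_vec n. v \<bullet> (X *\<^sub>v v) \<ge> 0)"

definition loewner_le :: "nat \<Rightarrow> real mat \<Rightarrow> real mat \<Rightarrow> bool" where
  "loewner_le n A B \<longleftrightarrow> psd_mat n (B - A)"

definition singular_values :: "real mat \<Rightarrow> real multiset" where
  "singular_values X = image_mset sqrt (proots (char_poly (transpose_mat X * X)))"

definition nuclear_norm :: "real mat \<Rightarrow> real" where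
  "nuclear_norm X = sum_mset (singular_values X)"

definition frob_norm :: "real mat \<Rightarrow> real" where
  "frob_norm X = sqrt (\<Sum>i<dim_row X. \<Sum>j<dim_col X. (X $$ (i,j))\<^sup>2)"

definition meas :: "(nat \<Rightarrow> real vec) \<Rightarrow> real mat \<Rightarrow> nat \<Rightarrow> real" where
  "meas a X i = a i \<bullet> (X *\<^sub>v a i)"

definition meas_l1 :: "(nat \<Rightarrow> real vec) \<Rightarrow> nat set \<Rightarrow> real mat \<Rightarrow> real" where
  "meas_l1 a S X = (\<Sum>i\<in>S. \<bar>meas a X i\<bar>)"

definition meas_adj :: "nat \<Rightarrow> nat \<Rightarrow> (nat \<Rightarrow> real vec) \<Rightarrow> (nat \<Rightarrow> real) \<Rightarrow> real mat" where
  "meas_adj n m a \<mu> = mat n n (\<lambda>(j,k). \<Sum>i<m. \<mu> i * (a i $ j) * (a i $ k))"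

definition tangent_space :: "nat \<Rightarrow> nat \<Rightarrow> real mat \<Rightarrow> real mat set" where
  "tangent_space n r U = {U * transpose_mat Z + Z * transpose_mat U | Z. Z \<in> carrier_mat n r}"

definition proj_Tperp :: "nat \<Rightarrow> real mat \<Rightarrow> real mat \<Rightarrow> real mat" where
  "proj_Tperp n U H = (1\<^sub>m n - U * transpose_mat U) * H * (1\<^sub>m n - U * transpose_mat U)"

definition proj_T :: "nat \<Rightarrow> real mat \<Rightarrow> real mat \<Rightarrow> real mat" where
  "proj_T n U H = H - proj_Tperp n U H"

end

theory Submission
  imports Defs
begin

text \<open>Split \<open>H = Xhat - X0\<close> into its tangent part \<open>H_T\<close> and \<open>H_Tperp = P H P\<close>,
  \<open>P = I - U U\<^sup>T\<close>. Since \<open>X0 P = 0\<close>, \<open>H_Tperp = P Xhat P\<close> is positive semidefinite.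
  Optimality of \<open>Xhat\<close> against \<open>X0\<close> bounds by \<open>2\<epsilon>\<close> the directional derivative of the
  \<open>\<ell>\<^sub>1\<close> loss at the outliers \<open>\<beta>\<close> in the direction \<open>\<A>(H)\<close>. Pairing with the dual
  certificate \<open>Y = \<A>\<^sup>*(\<mu>)\<close>, whose coefficients form a subgradient of that loss, gives
  \<open>\<langle>Y, H\<rangle> \<ge> -18\<epsilon>/m\<close>, while the two certificate conditions give
  \<open>\<langle>Y, H\<rangle> \<le> \<parallel>H_T\<parallel>\<^sub>F/(13r) - tr H_Tperp / r\<close>; so \<open>tr H_Tperp \<le> \<parallel>H_T\<parallel>\<^sub>F/13 + 18r\<epsilon>/m\<close>.
  The same directional-derivative bound, played against the lower bound for \<open>\<A>\<close> on the tangent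
  space off \<open>S\<close>, the upper bound on \<open>S\<close> (which costs a factor \<open>\<surd>(2r)\<close> on tangent matrices)
  and \<open>\<Sum>\<^sub>i a\<^sub>i\<^sup>T H_Tperp a\<^sub>i \<le> 1.1 m tr H_Tperp\<close>, then forces \<open>\<parallel>H_T\<parallel>\<^sub>F = O(r\<epsilon>/m)\<close>;
  hence \<open>tr H_Tperp\<close> and \<open>\<parallel>H\<parallel>\<^sub>F \<le> 2\<parallel>H_T\<parallel>\<^sub>F + 2 tr H_Tperp\<close> are \<open>O(r\<epsilon>/m)\<close> as well.\<close>

section \<open>Matrix algebra with dimension side conditions\<close>

text \<open>The carrier-based laws of \<open>Jordan_Normal_Form\<close>, restated with dimension equations
  so that the simplifier can discharge their side conditions.\<close>

lemma assoc_mult_mat_dims: "dim_col A = dim_row B \<Longrightarrow> dim_col B = dim_row C \<Longrightarrow> A * B * C = A * (B * C)"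
  by (rule assoc_mult_mat[of A "dim_row A" "dim_col A" B "dim_col B" C "dim_col C"], auto)

lemma mult_minus_distrib_mat_dims: fixes A :: "real mat"
  shows "dim_col A = dim_row B \<Longrightarrow> dim_row B = dim_row C \<Longrightarrow> dim_col B = dim_col C \<Longrightarrow> A * (B - C) = A * B - A * C"
  by (rule mult_minus_distrib_mat[of A "dim_row A" "dim_col A" B "dim_col B"], auto)

lemma minus_mult_distrib_mat_dims: fixes A :: "real mat"
  shows "dim_row A = dim_row B \<Longrightarrow> dim_col A = dim_col B \<Longrightarrow> dim_col A = dim_row C \<Longrightarrow> (A - B) * C = A * C - B * C"
  by (rule minus_mult_distrib_mat[of A "dim_row A" "dim_col A" B C "dim_col C"], auto)

lemma mult_add_distrib_mat_dims: fixes A :: "real mat"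
  shows "dim_col A = dim_row B \<Longrightarrow> dim_row B = dim_row C \<Longrightarrow> dim_col B = dim_col C \<Longrightarrow> A * (B + C) = A * B + A * C"
  by (rule mult_add_distrib_mat[of A "dim_row A" "dim_col A" B "dim_col B"], auto)

lemma add_mult_distrib_mat_dims: fixes A :: "real mat"
  shows "dim_row A = dim_row B \<Longrightarrow> dim_col A = dim_col B \<Longrightarrow> dim_col A = dim_row C \<Longrightarrow> (A + B) * C = A * C + B * C"
  by (rule add_mult_distrib_mat[of A "dim_row A" "dim_col A" B C "dim_col C"], auto)

lemma mult_smult_distrib_dims: fixes A :: "real mat"
  shows "dim_col A = dim_row B \<Longrightarrow> A * (k \<cdot>\<^sub>m B) = k \<cdot>\<^sub>m (A * B)"
  by (rule mult_smult_distrib[of A "dim_row A" "dim_col A" B "dim_col B"], auto)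

lemma mult_smult_assoc_mat_dims: fixes A :: "real mat"
  shows "dim_col A = dim_row B \<Longrightarrow> (k \<cdot>\<^sub>m A) * B = k \<cdot>\<^sub>m (A * B)"
  by (rule mult_smult_assoc_mat[of A "dim_row A" "dim_col A" B "dim_col B"], auto)

lemma transpose_mult_dims: fixes A :: "real mat"
  shows "dim_col A = dim_row B \<Longrightarrow> transpose_mat (A * B) = transpose_mat B * transpose_mat A"
  by (rule transpose_mult[of A "dim_row A" "dim_col A" B "dim_col B"], auto)

lemma transpose_minus_dims: fixes A :: "real mat"
  shows "dim_row A = dim_row B \<Longrightarrow> dim_col A = dim_col B \<Longrightarrow> transpose_mat (A - B) = transpose_mat A - transpose_mat B"
  by (rule eq_matI, auto)

lemma transpose_add_dims: fixes A :: "real mat"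
  shows "dim_row A = dim_row B \<Longrightarrow> dim_col A = dim_col B \<Longrightarrow> transpose_mat (A + B) = transpose_mat A + transpose_mat B"
  by (rule eq_matI, auto)

lemma transpose_smult: "transpose_mat (k \<cdot>\<^sub>m A) = k \<cdot>\<^sub>m transpose_mat (A :: real mat)"
  by (rule eq_matI, auto)

lemma assoc_mult_mat_vec_dims: "dim_col A = dim_row B \<Longrightarrow> dim_col B = dim_vec v \<Longrightarrow> (A * B) *\<^sub>v v = A *\<^sub>v (B *\<^sub>v v)"
  by (rule assoc_mult_mat_vec[of A "dim_row A" "dim_col A" B "dim_col B" v], auto)

lemmas mat_dims_simps = assoc_mult_mat_dims mult_minus_distrib_mat_dims minus_mult_distrib_mat_dims mult_add_distrib_mat_dims add_mult_distrib_mat_dims mult_smult_distrib_dims mult_smult_assoc_mat_dims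
  transpose_mult_dims transpose_minus_dims transpose_add_dims transpose_smult

lemma mat_minus_half: "(M::real mat) - (1/2) \<cdot>\<^sub>m M = (1/2) \<cdot>\<^sub>m M"
  by (rule eq_matI, auto)

lemma index_mult_mat_sum: assumes "A \<in> carrier_mat nr l" "B \<in> carrier_mat l nc" "i < nr" "j < nc"
  shows "(A * B) $$ (i,j) = (\<Sum>t<l. A$$(i,t) * B$$(t,j))"
  using assms by (simp add: scalar_prod_def atLeast0LessThan)

lemma smult_mat_mult_vec: "A \<in> carrier_mat nr nc \<Longrightarrow> v \<in> carrier_vec nc \<Longrightarrow> (k \<cdot>\<^sub>m A) *\<^sub>v v = k \<cdot>\<^sub>v (A *\<^sub>v v)"
  by (rule eq_vecI, auto simp: scalar_prod_def sum_distrib_left ac_simps)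

lemma scalar_prod_self_eq_0: assumes "w \<in> carrier_vec n" "w \<bullet> w = (0::real)" shows "w = 0\<^sub>v n"
proof (rule eq_vecI)
  have "(\<Sum>i\<in>{0..<n}. w$i * w$i) = 0" using assms by (simp add: scalar_prod_def)
  hence "\<forall>i\<in>{0..<n}. w$i * w$i = 0" by (subst sum_nonneg_eq_0_iff[symmetric], auto)
  thus "\<And>i. i < dim_vec (0\<^sub>v n) \<Longrightarrow> w $ i = 0\<^sub>v n $ i" by auto
qed (use assms in auto)

section \<open>Positive semidefinite quadratic forms\<close>

definition bilin :: "nat \<Rightarrow> (nat \<Rightarrow> nat \<Rightarrow> real) \<Rightarrow> (nat \<Rightarrow> real) \<Rightarrow> (nat \<Rightarrow> real) \<Rightarrow> real" where
  "bilin n A v w = (\<Sum>i<n. \<Sum>j<n. v i * A i j * w j)"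

definition point_fun :: "nat \<Rightarrow> real \<Rightarrow> nat \<Rightarrow> real" where
  "point_fun p x = (\<lambda>i. if i = p then x else 0)"

definition entry_inner :: "nat \<Rightarrow> (nat \<Rightarrow> nat \<Rightarrow> real) \<Rightarrow> (nat \<Rightarrow> nat \<Rightarrow> real) \<Rightarrow> real" where
  "entry_inner n A B = (\<Sum>i<n. \<Sum>j<n. A i j * B i j)"

lemma bilin_add_left: "bilin n A (\<lambda>i. v i + v' i) w = bilin n A v w + bilin n A v' w"
  unfolding bilin_def by (simp add: distrib_left distrib_right sum.distrib)

lemma bilin_add_right: "bilin n A v (\<lambda>i. w i + w' i) = bilin n A v w + bilin n A v w'"
  unfolding bilin_def by (simp add: distrib_left distrib_right sum.distrib)

lemma sum_point_fun_mult: assumes "p < n" shows "(\<Sum>i<n. point_fun p x i * f i) = x * f p"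
proof -
  have "(\<Sum>i<n. point_fun p x i * f i) = (\<Sum>i\<in>{p}. point_fun p x i * f i)"
    by (rule sum.mono_neutral_right, use assms in \<open>auto simp: point_fun_def\<close>)
  thus ?thesis by (simp add: point_fun_def)
qed

lemma sum_mult_point_fun: assumes "p < n" shows "(\<Sum>i<n. f i * point_fun p x i) = f p * x"
  using sum_point_fun_mult[OF assms, of x f] by (simp add: mult.commute)

lemma bilin_point_fun_left:
  assumes "p < n" shows "bilin n A (point_fun p x) w = x * (\<Sum>j<n. A p j * w j)"
proof -
  have "bilin n A (point_fun p x) w = (\<Sum>i<n. point_fun p x i * (\<Sum>j<n. A i j * w j))"
    unfolding bilin_def by (simp add: sum_distrib_left mult.assoc)
  thus ?thesis by (simp add: sum_point_fun_mult[OF assms])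
qed

lemma bilin_point_fun_right:
  assumes "q < n" shows "bilin n A v (point_fun q y) = (\<Sum>i<n. v i * A i q) * y"
proof -
  have "bilin n A v (point_fun q y) = (\<Sum>i<n. v i * (\<Sum>j<n. A i j * point_fun q y j))"
    unfolding bilin_def by (simp add: sum_distrib_left mult.assoc)
  also have "\<dots> = (\<Sum>i<n. v i * (A i q * y))" using sum_mult_point_fun[OF assms] by simp
  finally show ?thesis by (simp add: sum_distrib_right mult.assoc)
qed

lemma bilin_point_fun:
  assumes "p < n" "q < n" shows "bilin n A (point_fun p x) (point_fun q y) = x * y * A p q"
  using bilin_point_fun_left[OF assms(1)] sum_mult_point_fun[OF assms(2)] by simp

lemma psd_form_diag_nonneg:
  assumes psd: "\<And>v. bilin n A v v \<ge> 0" and p: "p < n"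
  shows "A p p \<ge> 0"
  using psd[of "point_fun p 1"] bilin_point_fun[OF p p, of A 1 1] by simp

lemma psd_form_two_coords:
  assumes psd: "\<And>v. bilin n A v v \<ge> 0" and p: "p < n" and q: "q < n" and sym: "A q p = A p q"
  shows "x*x*A p p + 2*x*y*A p q + y*y*A q q \<ge> 0"
proof -
  have "bilin n A (\<lambda>i. point_fun p x i + point_fun q y i) (\<lambda>i. point_fun p x i + point_fun q y i)
        = x*x*A p p + 2*x*y*A p q + y*y*A q q"
    by (simp add: bilin_add_left bilin_add_right bilin_point_fun p q sym)
  thus ?thesis using psd by metis
qed

lemma psd_form_zero_diag:
  assumes psd: "\<And>v. bilin n A v v \<ge> 0" and p: "p < n" and q: "q < n" and sym: "A q p = A p q"
    and zero: "A p p = 0"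
  shows "A p q = 0"
proof (rule ccontr)
  assume ne: "A p q \<noteq> 0"
  define x where "x = - (A q q + 1) / (2 * A p q)"
  have "x*x*A p p + 2*x*1*A p q + 1*1*A q q \<ge> 0" by (rule psd_form_two_coords[OF psd p q sym])
  also have "x*x*A p p + 2*x*1*A p q + 1*1*A q q = -1"
    using ne zero unfolding x_def by (simp add: field_simps)
  finally show False by simp
qed

lemma psd_form_offdiag_sq_le:
  assumes psd: "\<And>v. bilin n A v v \<ge> 0" and p: "p < n" and q: "q < n" and sym: "A q p = A p q"
  shows "(A p q)^2 \<le> A p p * A q q"
proof (cases "A q q = 0")
  case True
  have "A q p = 0" by (rule psd_form_zero_diag[OF psd q p _ True], simp add: sym)
  thus ?thesis using True sym by simp
next
  case False
  have qq: "A q q > 0" using psd_form_diag_nonneg[OF psd q] False by simp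
  have "A q q*A q q*A p p + 2*A q q*(- A p q)*A p q + (- A p q)*(- A p q)*A q q \<ge> 0"
    by (rule psd_form_two_coords[OF psd p q sym])
  hence "A q q * (A p p * A q q - (A p q)^2) \<ge> 0" by (simp add: algebra_simps power2_eq_square)
  hence "A p p * A q q - (A p q)^2 \<ge> 0" using qq by (simp add: zero_le_mult_iff)
  thus ?thesis by simp
qed

lemma psd_form_schur_complement:
  assumes sym: "\<forall>i<n. \<forall>j<n. A j i = A i j" and psd: "\<forall>v. bilin n A v v \<ge> 0"
    and p: "p < n" and pp: "A p p > 0"
  shows "bilin n (\<lambda>i j. A i j - A i p * A p j / A p p) v v \<ge> 0"
proof -
  define c where "c = (\<Sum>j<n. A p j * v j)"
  have c': "(\<Sum>i<n. v i * A i p) = c" unfolding c_def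
    by (intro sum.cong refl, use sym p in \<open>auto simp: mult.commute\<close>)
  have cc: "(\<Sum>i<n. \<Sum>j<n. (v i * A i p) * (A p j * v j)) = c * c"
    unfolding sum_product[symmetric] c' c_def ..
  define s where "s = c / A p p"
  have "bilin n (\<lambda>i j. A i j - A i p * A p j / A p p) v v
      = bilin n A v v - (\<Sum>i<n. \<Sum>j<n. (v i * A i p) * (A p j * v j)) / A p p"
    unfolding bilin_def
    by (simp add: algebra_simps diff_divide_distrib sum_subtractf sum_divide_distrib)
  also have "\<dots> = bilin n A v v - c * c / A p p" unfolding cc ..
  also have "\<dots> = bilin n A (\<lambda>i. v i + point_fun p (- s) i) (\<lambda>i. v i + point_fun p (- s) i)"
  proof -
    have "bilin n A (\<lambda>i. v i + point_fun p (- s) i) (\<lambda>i. v i + point_fun p (- s) i)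
        = bilin n A v v + (- s) * c + c * (- s) + (- s) * (- s) * A p p"
      by (simp add: bilin_add_left bilin_add_right bilin_point_fun bilin_point_fun_left
          bilin_point_fun_right p c' c_def[symmetric] sum_point_fun_mult[OF p])
    moreover have "(- s) * c + c * (- s) + (- s) * (- s) * A p p = - (c * c / A p p)"
      using pp unfolding s_def by (simp add: field_simps)
    ultimately show ?thesis by simp
  qed
  finally show ?thesis using psd by simp
qed

lemma entry_inner_schur_split:
  assumes sym: "\<forall>i<n. \<forall>j<n. A j i = A i j" and p: "p < n" and pp: "A p p \<noteq> 0"
  shows "entry_inner n A B = entry_inner n (\<lambda>i j. A i j - A i p * A p j / A p p) B
           + bilin n B (\<lambda>i. A i p) (\<lambda>i. A i p) / A p p"
proof -
  have "entry_inner n A B = (\<Sum>i<n. \<Sum>j<n. (A i j - A i p * A p j / A p p) * B i j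
                                         + A i p * B i j * A j p / A p p)"
    unfolding entry_inner_def by (intro sum.cong refl, use sym p pp in \<open>auto simp: field_simps\<close>)
  thus ?thesis unfolding entry_inner_def bilin_def by (simp add: sum.distrib sum_divide_distrib)
qed

text \<open>Gaussian elimination: clearing one row and column of \<open>A\<close> at a time by Schur complements
  keeps \<open>A\<close> positive semidefinite and changes \<open>entry_inner n A B\<close> by a nonnegative amount.\<close>

lemma entry_inner_psd_nonneg_aux:
  assumes "n - k = d" "k \<le> n" "\<forall>i<n. \<forall>j<n. A j i = A i j" "\<forall>v. bilin n A v v \<ge> 0"
    and psdB: "\<forall>v. bilin n B v v \<ge> 0"
    and "\<forall>i<n. \<forall>j<n. (i < k \<or> j < k) \<longrightarrow> A i j = 0"
  shows "entry_inner n A B \<ge> 0"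
  using assms(1-4,6)
proof (induction d arbitrary: k A)
  case 0
  thus ?case unfolding entry_inner_def by simp
next
  case (Suc d)
  note sym = Suc.prems(3) and psd = Suc.prems(4) and zero = Suc.prems(5)
  have k: "k < n" and d: "n - Suc k = d" and kn: "Suc k \<le> n" using Suc.prems(1) by auto
  show ?case
  proof (cases "A k k = 0")
    case True
    have "A k j = 0" "A j k = 0" if "j < n" for j
      using psd_form_zero_diag[of n A k j, OF _ k that _ True] sym k that psd by metis+
    hence "\<forall>i<n. \<forall>j<n. (i < Suc k \<or> j < Suc k) \<longrightarrow> A i j = 0"
      using zero by (metis less_Suc_eq)
    thus ?thesis by (rule Suc.IH[OF d kn sym psd])
  next
    case False
    have kk: "A k k > 0" using psd_form_diag_nonneg[of n A, OF _ k] psd False by force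
    let ?A' = "\<lambda>i j. A i j - A i k * A k j / A k k"
    have "entry_inner n ?A' B \<ge> 0"
    proof (rule Suc.IH[OF d kn])
      show "\<forall>i<n. \<forall>j<n. ?A' j i = ?A' i j" using sym k by (auto simp: algebra_simps)
      show "\<forall>v. bilin n ?A' v v \<ge> 0" using psd_form_schur_complement[OF sym psd k kk] by blast
      show "\<forall>i<n. \<forall>j<n. (i < Suc k \<or> j < Suc k) \<longrightarrow> ?A' i j = 0"
        using zero kk k by (auto simp: less_Suc_eq)
    qed
    moreover have "bilin n B (\<lambda>i. A i k) (\<lambda>i. A i k) / A k k \<ge> 0" using psdB kk by simp
    ultimately show ?thesis using entry_inner_schur_split[OF sym k False] by simp
  qed
qed

lemma entry_inner_psd_nonneg:
  assumes "\<forall>i<n. \<forall>j<n. A j i = A i j" "\<forall>v. bilin n A v v \<ge> 0" "\<forall>v. bilin n B v v \<ge> 0"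
  shows "entry_inner n A B \<ge> 0"
  by (rule entry_inner_psd_nonneg_aux[of n 0 n], use assms in auto)

section \<open>The Frobenius inner product\<close>

definition frob_inner :: "real mat \<Rightarrow> real mat \<Rightarrow> real" where
  "frob_inner A B = (\<Sum>i<dim_row A. \<Sum>j<dim_col A. A$$(i,j) * B$$(i,j))"

lemma frob_inner_comm: "A \<in> carrier_mat nr nc \<Longrightarrow> B \<in> carrier_mat nr nc \<Longrightarrow> frob_inner A B = frob_inner B A"
  unfolding frob_inner_def by (simp add: mult.commute)

lemma frob_inner_add_left: "A \<in> carrier_mat nr nc \<Longrightarrow> B \<in> carrier_mat nr nc \<Longrightarrow> frob_inner (A + B) C = frob_inner A C + frob_inner B C"
  unfolding frob_inner_def by (simp add: distrib_right sum.distrib)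

lemma frob_inner_add_right: "A \<in> carrier_mat nr nc \<Longrightarrow> B \<in> carrier_mat nr nc \<Longrightarrow> C \<in> carrier_mat nr nc \<Longrightarrow> frob_inner C (A + B) = frob_inner C A + frob_inner C B"
  unfolding frob_inner_def by (simp add: distrib_left sum.distrib)

lemma frob_inner_minus_left: "A \<in> carrier_mat nr nc \<Longrightarrow> B \<in> carrier_mat nr nc \<Longrightarrow> frob_inner (A - B) C = frob_inner A C - frob_inner B C"
  unfolding frob_inner_def by (simp add: left_diff_distrib sum_subtractf)

lemma frob_inner_minus_right: "A \<in> carrier_mat nr nc \<Longrightarrow> B \<in> carrier_mat nr nc \<Longrightarrow> C \<in> carrier_mat nr nc \<Longrightarrow> frob_inner C (A - B) = frob_inner C A - frob_inner C B"
  unfolding frob_inner_def by (simp add: right_diff_distrib sum_subtractf)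

lemma frob_inner_smult_right: "C \<in> carrier_mat nr nc \<Longrightarrow> A \<in> carrier_mat nr nc \<Longrightarrow> frob_inner C (k \<cdot>\<^sub>m A) = k * frob_inner C A"
  unfolding frob_inner_def by (simp add: sum_distrib_left ac_simps)

lemma frob_inner_transpose: "A \<in> carrier_mat nr nc \<Longrightarrow> B \<in> carrier_mat nr nc \<Longrightarrow>
   frob_inner (transpose_mat A) (transpose_mat B) = frob_inner A B"
  unfolding frob_inner_def by (simp, rule sum.swap)

lemma frob_inner_mult_left:
  assumes A: "A \<in> carrier_mat k l" and B: "B \<in> carrier_mat l c" and C: "C \<in> carrier_mat k c"
  shows "frob_inner (A * B) C = frob_inner B (transpose_mat A * C)"
proof -
  have "frob_inner (A * B) C = (\<Sum>i<k. \<Sum>j<c. (\<Sum>t<l. A$$(i,t) * B$$(t,j)) * C$$(i,j))"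
  proof -
    have "dim_row (A * B) = k" "dim_col (A * B) = c" using A B by auto
    thus ?thesis unfolding frob_inner_def using index_mult_mat_sum[OF A B] by simp
  qed
  also have "\<dots> = (\<Sum>i<k. \<Sum>j<c. \<Sum>t<l. B$$(t,j) * (A$$(i,t) * C$$(i,j)))"
    by (intro sum.cong refl, subst sum_distrib_right, intro sum.cong refl, simp)
  also have "\<dots> = (\<Sum>j<c. \<Sum>i<k. \<Sum>t<l. B$$(t,j) * (A$$(i,t) * C$$(i,j)))"
    by (rule sum.swap)
  also have "\<dots> = (\<Sum>j<c. \<Sum>t<l. \<Sum>i<k. B$$(t,j) * (A$$(i,t) * C$$(i,j)))"
    by (rule sum.cong[OF refl], rule sum.swap)
  also have "\<dots> = (\<Sum>t<l. \<Sum>j<c. \<Sum>i<k. B$$(t,j) * (A$$(i,t) * C$$(i,j)))"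
    by (rule sum.swap)
  also have "\<dots> = (\<Sum>t<l. \<Sum>j<c. B$$(t,j) * (transpose_mat A * C)$$(t,j))"
  proof (intro sum.cong refl)
    fix t j assume "t \<in> {..<l}" "j \<in> {..<c}"
    hence "(transpose_mat A * C)$$(t,j) = (\<Sum>i<k. A$$(i,t) * C$$(i,j))"
      using A C by (subst index_mult_mat_sum[of _ l k _ c], auto)
    thus "(\<Sum>i<k. B $$ (t, j) * (A $$ (i, t) * C $$ (i, j))) = B $$ (t, j) * (transpose_mat A * C) $$ (t, j)"
      by (simp add: sum_distrib_left)
  qed
  also have "\<dots> = frob_inner B (transpose_mat A * C)" unfolding frob_inner_def using B by simp
  finally show ?thesis .
qed

lemma frob_inner_mult_right:
  assumes A: "A \<in> carrier_mat k l" and B: "B \<in> carrier_mat l c" and C: "C \<in> carrier_mat k c"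
  shows "frob_inner (A * B) C = frob_inner A (C * transpose_mat B)"
proof -
  have "frob_inner (A * B) C = frob_inner (transpose_mat (A * B)) (transpose_mat C)"
    using A B C by (simp add: frob_inner_transpose[of _ k c])
  also have "transpose_mat (A * B) = transpose_mat B * transpose_mat A" using A B by (simp add: transpose_mult)
  also have "frob_inner \<dots> (transpose_mat C) = frob_inner (transpose_mat A) (transpose_mat (transpose_mat B) * transpose_mat C)"
    using A B C by (intro frob_inner_mult_left[of _ c l _ k], auto)
  also have "transpose_mat (transpose_mat B) * transpose_mat C = transpose_mat (C * transpose_mat B)"
    using B C by (simp add: transpose_mult)
  also have "frob_inner (transpose_mat A) \<dots> = frob_inner A (C * transpose_mat B)"
    using A B C by (intro frob_inner_transpose, auto)
  finally show ?thesis .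
qed

lemma frob_norm_eq_sqrt_frob_inner: "frob_norm A = sqrt (frob_inner A A)"
  unfolding frob_norm_def frob_inner_def by (simp add: power2_eq_square)

lemma frob_inner_self_nonneg: "frob_inner A A \<ge> 0"
  unfolding frob_inner_def by (intro sum_nonneg, simp)

lemma frob_inner_self_eq_0:
  assumes A: "A \<in> carrier_mat n k" and z: "frob_inner A A = 0"
  shows "A = 0\<^sub>m n k"
proof (rule eq_matI)
  fix i j assume ij: "i < dim_row (0\<^sub>m n k)" "j < dim_col (0\<^sub>m n k)"
  have "(\<Sum>i<n. \<Sum>j<k. A$$(i,j) * A$$(i,j)) = 0" using z A unfolding frob_inner_def by simp
  hence "\<forall>i\<in>{..<n}. (\<Sum>j<k. A$$(i,j) * A$$(i,j)) = 0"
    by (subst sum_nonneg_eq_0_iff[symmetric], auto intro: sum_nonneg)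
  hence "\<forall>i\<in>{..<n}. \<forall>j\<in>{..<k}. A$$(i,j) * A$$(i,j) = 0"
    by (auto simp: sum_nonneg_eq_0_iff)
  thus "A $$ (i,j) = 0\<^sub>m n k $$ (i,j)" using ij by auto
qed (use A in auto)

lemma frob_inner_self_cols: assumes Z: "Z \<in> carrier_mat n r"
  shows "frob_inner Z Z = (\<Sum>k<r. col Z k \<bullet> col Z k)"
proof -
  have "frob_inner Z Z = (\<Sum>i<n. \<Sum>k<r. Z$$(i,k) * Z$$(i,k))" unfolding frob_inner_def using Z by simp
  also have "\<dots> = (\<Sum>k<r. \<Sum>i<n. Z$$(i,k) * Z$$(i,k))" by (rule sum.swap)
  also have "\<dots> = (\<Sum>k<r. col Z k \<bullet> col Z k)" using Z by (intro sum.cong refl, simp add: scalar_prod_def atLeast0LessThan)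
  finally show ?thesis .
qed

lemma frob_inner_le_weighted:
  assumes A: "A \<in> carrier_mat n k" and B: "B \<in> carrier_mat n k" and s: "s > 0"
  shows "frob_inner A B \<le> (s * frob_inner A A + frob_inner B B / s) / 2"
proof -
  have "frob_inner A B = (\<Sum>i<n. \<Sum>j<k. A$$(i,j) * B$$(i,j))" unfolding frob_inner_def using A by simp
  also have "\<dots> \<le> (\<Sum>i<n. \<Sum>j<k. (s * (A$$(i,j) * A$$(i,j)) + (B$$(i,j) * B$$(i,j)) / s) / 2)"
  proof (intro sum_mono)
    fix i j
    have "0 \<le> (s * A$$(i,j) - B$$(i,j))^2 / s" using s by simp
    also have "(s * A$$(i,j) - B$$(i,j))^2 / s = s * (A$$(i,j) * A$$(i,j)) + (B$$(i,j) * B$$(i,j)) / s - 2 * (A$$(i,j) * B$$(i,j))"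
      using s by (simp add: power2_eq_square field_simps)
    finally show "A$$(i,j) * B$$(i,j) \<le> (s * (A$$(i,j) * A$$(i,j)) + (B$$(i,j) * B$$(i,j)) / s) / 2" by simp
  qed
  also have "\<dots> = (\<Sum>i<n. \<Sum>j<k. (s * (A$$(i,j) * A$$(i,j)))) / 2 + (\<Sum>i<n. \<Sum>j<k. (B$$(i,j) * B$$(i,j)) / s) / 2"
    by (simp add: sum.distrib sum_divide_distrib add_divide_distrib)
  also have "\<dots> = (s * frob_inner A A + frob_inner B B / s) / 2"
    unfolding frob_inner_def using A B by (simp add: sum_divide_distrib sum_distrib_left add_divide_distrib)
  finally show ?thesis .
qed

lemma frob_inner_le_frob_norm_mult:
  assumes A: "A \<in> carrier_mat n k" and B: "B \<in> carrier_mat n k"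
  shows "frob_inner A B \<le> frob_norm A * frob_norm B"
proof (cases "frob_norm A = 0 \<or> frob_norm B = 0")
  case True
  hence "A = 0\<^sub>m n k \<or> B = 0\<^sub>m n k"
    using frob_inner_self_eq_0[OF A] frob_inner_self_eq_0[OF B]
    unfolding frob_norm_eq_sqrt_frob_inner by (auto simp: frob_inner_self_nonneg)
  hence "frob_inner A B = 0" unfolding frob_inner_def using A B by auto
  thus ?thesis using True by auto
next
  case False
  have pos: "frob_norm A > 0" "frob_norm B > 0"
    using False frob_inner_self_nonneg[of A] frob_inner_self_nonneg[of B]
    unfolding frob_norm_eq_sqrt_frob_inner by auto
  have sq: "frob_inner A A = (frob_norm A)^2" "frob_inner B B = (frob_norm B)^2"
    unfolding frob_norm_eq_sqrt_frob_inner using frob_inner_self_nonneg by auto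
  have "frob_inner A B \<le> ((frob_norm B / frob_norm A) * frob_inner A A
                            + frob_inner B B / (frob_norm B / frob_norm A)) / 2"
    using pos by (intro frob_inner_le_weighted[OF A B], simp)
  also have "\<dots> = frob_norm A * frob_norm B"
    unfolding sq using pos by (simp add: field_simps power2_eq_square)
  finally show ?thesis .
qed

lemma frob_inner_add_self_le:
  assumes D: "D \<in> carrier_mat n n" and G: "G \<in> carrier_mat n n"
  shows "frob_inner (D + G) (D + G) \<le> 2 * frob_inner D D + 2 * frob_inner G G"
proof -
  have "frob_inner (D + G) (D + G) = (\<Sum>i<n. \<Sum>j<n. (D$$(i,j) + G$$(i,j))^2)"
    unfolding frob_inner_def using D G by (simp add: power2_eq_square)
  also have "\<dots> \<le> (\<Sum>i<n. \<Sum>j<n. 2 * (D$$(i,j))^2 + 2 * (G$$(i,j))^2)"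
  proof (intro sum_mono)
    fix i j
    have "0 \<le> (D$$(i,j) - G$$(i,j))^2" by simp
    thus "(D$$(i,j) + G$$(i,j))^2 \<le> 2 * (D$$(i,j))^2 + 2 * (G$$(i,j))^2"
      by (simp add: power2_eq_square algebra_simps)
  qed
  also have "\<dots> = 2 * frob_inner D D + 2 * frob_inner G G"
    unfolding frob_inner_def using D G by (simp add: sum.distrib sum_distrib_left power2_eq_square)
  finally show ?thesis .
qed

lemma frob_inner_orthonormal_self:
  assumes U: "U \<in> carrier_mat n r" and UU: "transpose_mat U * U = 1\<^sub>m r" and Z: "Z \<in> carrier_mat n r"
  shows "frob_inner (U * transpose_mat Z) (U * transpose_mat Z) = frob_inner Z Z"
proof -
  have ZT: "transpose_mat Z \<in> carrier_mat r n" using Z by simp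
  have "frob_inner (U * transpose_mat Z) (U * transpose_mat Z)
      = frob_inner (transpose_mat Z) (transpose_mat U * (U * transpose_mat Z))"
    using U ZT by (intro frob_inner_mult_left[of _ n r _ n]) auto
  also have "transpose_mat U * (U * transpose_mat Z) = transpose_mat Z"
    using U ZT UU by (simp add: assoc_mult_mat[of _ r n _ r _ n, symmetric])
  also have "frob_inner (transpose_mat Z) (transpose_mat Z) = frob_inner Z Z"
    using Z by (intro frob_inner_transpose) auto
  finally show ?thesis .
qed

definition trace_mat :: "real mat \<Rightarrow> real" where
  "trace_mat A = (\<Sum>i<dim_row A. A $$ (i,i))"

lemma frob_inner_one_left: assumes "G \<in> carrier_mat n n" shows "frob_inner (1\<^sub>m n) G = trace_mat G"
proof -
  have "frob_inner (1\<^sub>m n) G = (\<Sum>i<n. \<Sum>j<n. (if i = j then G$$(i,j) else 0))"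
    unfolding frob_inner_def by (intro sum.cong refl, auto)
  also have "\<dots> = trace_mat G" using assms by (simp add: sum.delta trace_mat_def)
  finally show ?thesis .
qed

lemma psd_mat_carrier: "psd_mat n X \<Longrightarrow> X \<in> carrier_mat n n"
  unfolding psd_mat_def sym_mat_def by simp

lemma frob_inner_eq_entry_inner: "A \<in> carrier_mat n n \<Longrightarrow> frob_inner A B = entry_inner n (\<lambda>i j. A$$(i,j)) (\<lambda>i j. B$$(i,j))"
  unfolding frob_inner_def entry_inner_def by simp

lemma quad_form_vec_eq_bilin: assumes "X \<in> carrier_mat n n"
  shows "vec n f \<bullet> (X *\<^sub>v vec n f) = bilin n (\<lambda>i j. X$$(i,j)) f f"
  using assms unfolding bilin_def by (simp add: scalar_prod_def atLeast0LessThan sum_distrib_left ac_simps)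

lemma quad_form_eq_bilin: assumes "X \<in> carrier_mat n n" "v \<in> carrier_vec n"
  shows "v \<bullet> (X *\<^sub>v v) = bilin n (\<lambda>i j. X$$(i,j)) (\<lambda>i. v$i) (\<lambda>i. v$i)"
proof -
  have "v = vec n (\<lambda>i. v$i)" using assms by auto
  thus ?thesis using quad_form_vec_eq_bilin[OF assms(1)] by metis
qed

lemma psd_mat_bilin_nonneg: assumes "psd_mat n X" shows "\<forall>f. bilin n (\<lambda>i j. X$$(i,j)) f f \<ge> 0"
  using assms quad_form_vec_eq_bilin[of X n] unfolding psd_mat_def sym_mat_def by (metis vec_carrier)

lemma psd_mat_entry_sym: assumes "psd_mat n X" shows "\<forall>i<n. \<forall>j<n. X$$(j,i) = X$$(i,j)"
proof (intro allI impI)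
  fix i j assume "i < n" "j < n"
  moreover have "transpose_mat X = X" "X \<in> carrier_mat n n" using assms unfolding psd_mat_def sym_mat_def by auto
  ultimately show "X$$(j,i) = X$$(i,j)" by (metis carrier_matD index_transpose_mat(1))
qed

lemma frob_inner_psd_nonneg: assumes "psd_mat n A" "psd_mat n B" shows "frob_inner A B \<ge> 0"
proof -
  from psd_mat_carrier[OF assms(1)] show ?thesis using entry_inner_psd_nonneg[OF psd_mat_entry_sym[OF assms(1)] psd_mat_bilin_nonneg[OF assms(1)] psd_mat_bilin_nonneg[OF assms(2)]]
    by (simp add: frob_inner_eq_entry_inner)
qed

lemma psd_mat_diag_nonneg: assumes "psd_mat n G" "i < n" shows "G$$(i,i) \<ge> 0"
  using psd_form_diag_nonneg[of n "\<lambda>i j. G$$(i,j)"] psd_mat_bilin_nonneg[OF assms(1)] assms(2) by auto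

lemma psd_mat_trace_nonneg: assumes "psd_mat n G" shows "trace_mat G \<ge> 0"
  using assms psd_mat_diag_nonneg[OF assms] unfolding trace_mat_def psd_mat_def sym_mat_def
  by (auto intro: sum_nonneg)

lemma frob_inner_self_le_trace_sq:
  assumes G: "psd_mat n G"
  shows "frob_inner G G \<le> (trace_mat G)^2"
proof -
  have Gc: "G \<in> carrier_mat n n" using psd_mat_carrier[OF G] .
  have ps: "\<And>v. bilin n (\<lambda>i j. G$$(i,j)) v v \<ge> 0" using psd_mat_bilin_nonneg[OF G] by auto
  have sy: "\<forall>i<n. \<forall>j<n. G$$(j,i) = G$$(i,j)" using psd_mat_entry_sym[OF G] .
  have "frob_inner G G = (\<Sum>i<n. \<Sum>j<n. (G$$(i,j))^2)" unfolding frob_inner_def using Gc by (simp add: power2_eq_square)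
  also have "\<dots> \<le> (\<Sum>i<n. \<Sum>j<n. G$$(i,i) * G$$(j,j))"
    by (intro sum_mono, rule psd_form_offdiag_sq_le[OF ps], use sy in auto)
  also have "\<dots> = (trace_mat G)^2" using Gc by (simp add: trace_mat_def power2_eq_square sum_product)
  finally show ?thesis .
qed

lemma frob_norm_add_psd_le:
  assumes D: "D \<in> carrier_mat n n" and G: "psd_mat n G"
  shows "frob_norm (D + G) \<le> 2 * frob_norm D + 2 * trace_mat G"
proof -
  have Gc: "G \<in> carrier_mat n n" using psd_mat_carrier[OF G] .
  have f0: "frob_norm D \<ge> 0" and t0: "trace_mat G \<ge> 0"
    using psd_mat_trace_nonneg[OF G] frob_inner_self_nonneg
    unfolding frob_norm_eq_sqrt_frob_inner by auto
  have "frob_inner (D + G) (D + G) \<le> 2 * frob_inner D D + 2 * frob_inner G G"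
    by (rule frob_inner_add_self_le[OF D Gc])
  also have "\<dots> \<le> 2 * (frob_norm D)^2 + 2 * (trace_mat G)^2"
    using frob_inner_self_le_trace_sq[OF G] frob_inner_self_nonneg
    unfolding frob_norm_eq_sqrt_frob_inner by simp
  also have "\<dots> \<le> (2 * frob_norm D + 2 * trace_mat G)^2"
    using f0 t0 by (simp add: power2_eq_square algebra_simps)
  finally have "sqrt (frob_inner (D + G) (D + G)) \<le> sqrt ((2 * frob_norm D + 2 * trace_mat G)^2)"
    by (rule real_sqrt_le_mono)
  thus ?thesis unfolding frob_norm_eq_sqrt_frob_inner[of "D + G"] using f0 t0 by simp
qed

lemma psd_mat_sandwich:
  fixes Q X :: "real mat"
  assumes Q: "Q \<in> carrier_mat n n" and QT: "transpose_mat Q = Q" and X: "psd_mat n X"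
  shows "psd_mat n (Q * X * Q)"
proof -
  have Xc: "X \<in> carrier_mat n n" and XT: "transpose_mat X = X" using X unfolding psd_mat_def sym_mat_def by auto
  have sym: "sym_mat n (Q * X * Q)" unfolding sym_mat_def using Q Xc
    by (simp add: mat_dims_simps QT XT)
  have "v \<bullet> ((Q * X * Q) *\<^sub>v v) \<ge> 0" if v: "v \<in> carrier_vec n" for v
  proof -
    have "(Q * X * Q) *\<^sub>v v = Q *\<^sub>v (X *\<^sub>v (Q *\<^sub>v v))" using Q Xc v by (simp add: assoc_mult_mat_vec_dims)
    hence "v \<bullet> ((Q * X * Q) *\<^sub>v v) = (transpose_mat Q *\<^sub>v v) \<bullet> (X *\<^sub>v (Q *\<^sub>v v))"
      using Q Xc v by (simp add: transpose_vec_mult_scalar[of Q n n])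
    also have "\<dots> = (Q *\<^sub>v v) \<bullet> (X *\<^sub>v (Q *\<^sub>v v))" unfolding QT ..
    also have "\<dots> \<ge> 0" using X Q v unfolding psd_mat_def by simp
    finally show ?thesis .
  qed
  thus ?thesis using sym unfolding psd_mat_def by auto
qed

section \<open>Rank-one matrices and their nuclear norm\<close>

definition outer :: "real vec \<Rightarrow> real vec \<Rightarrow> real mat" where
  "outer x y = mat (dim_vec x) (dim_vec y) (\<lambda>(i,j). x$i * y$j)"

lemma outer_dims[simp]: "dim_row (outer x y) = dim_vec x" "dim_col (outer x y) = dim_vec y"
  unfolding outer_def by auto

lemma outer_carrier: "x \<in> carrier_vec n \<Longrightarrow> y \<in> carrier_vec m \<Longrightarrow> outer x y \<in> carrier_mat n m"
  unfolding outer_def by auto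

lemma outer_index[simp]: "i < dim_vec x \<Longrightarrow> j < dim_vec y \<Longrightarrow> outer x y $$ (i,j) = x$i * y$j"
  unfolding outer_def by auto

lemma outer_mult_vec: assumes "z \<in> carrier_vec (dim_vec y)"
  shows "outer x y *\<^sub>v z = (y \<bullet> z) \<cdot>\<^sub>v x"
proof (rule eq_vecI)
  fix i assume i: "i < dim_vec ((y \<bullet> z) \<cdot>\<^sub>v x)"
  hence "(outer x y *\<^sub>v z) $ i = (\<Sum>j\<in>{0..<dim_vec y}. x$i * y$j * z$j)"
    using assms by (simp add: scalar_prod_def row_def)
  also have "\<dots> = x$i * (y \<bullet> z)" using assms by (simp add: scalar_prod_def sum_distrib_left mult.assoc)
  finally show "(outer x y *\<^sub>v z) $ i = ((y \<bullet> z) \<cdot>\<^sub>v x) $ i" using i by simp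
qed (simp)

lemma mult_outer: assumes A: "A \<in> carrier_mat k n" and x: "x \<in> carrier_vec n"
  shows "A * outer x y = outer (A *\<^sub>v x) y"
proof (rule eq_matI)
  fix i j assume "i < dim_row (outer (A *\<^sub>v x) y)" "j < dim_col (outer (A *\<^sub>v x) y)"
  hence ij: "i < k" "j < dim_vec y" using A by auto
  have "(A * outer x y) $$ (i,j) = (\<Sum>t\<in>{0..<n}. A$$(i,t) * (x$t * y$j))"
    using A x ij by (simp add: scalar_prod_def)
  also have "\<dots> = (row A i \<bullet> x) * y$j" using A x ij
    by (simp add: scalar_prod_def sum_distrib_right, intro sum.cong refl, simp add: ac_simps)
  finally show "(A * outer x y) $$ (i,j) = outer (A *\<^sub>v x) y $$ (i,j)" using ij A by simp
qed (use A x in auto)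

lemma outer_mult: assumes B: "B \<in> carrier_mat m c" and y: "y \<in> carrier_vec m"
  shows "outer x y * B = outer x (transpose_mat B *\<^sub>v y)"
proof (rule eq_matI)
  fix i j assume "i < dim_row (outer x (transpose_mat B *\<^sub>v y))" "j < dim_col (outer x (transpose_mat B *\<^sub>v y))"
  hence ij: "i < dim_vec x" "j < c" using B by auto
  have "(outer x y * B) $$ (i,j) = (\<Sum>t\<in>{0..<m}. (x$i * y$t) * B$$(t,j))"
    using B y ij by (simp add: scalar_prod_def)
  also have "\<dots> = x$i * (col B j \<bullet> y)" using B y ij
    by (simp add: scalar_prod_def sum_distrib_left ac_simps)
  finally show "(outer x y * B) $$ (i,j) = outer x (transpose_mat B *\<^sub>v y) $$ (i,j)" using ij B by simp
qed (use B y in auto)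

lemma outer_smult_right: "outer x (k \<cdot>\<^sub>v w) = k \<cdot>\<^sub>m outer x w"
  by (rule eq_matI, auto)

lemma transpose_outer: "transpose_mat (outer x y) = outer y x"
  by (rule eq_matI, auto)

lemma outer_outer: assumes "y \<in> carrier_vec m" "z \<in> carrier_vec m" "w \<in> carrier_vec c"
  shows "outer x y * outer z w = (y \<bullet> z) \<cdot>\<^sub>m outer x w"
proof -
  have "outer x y * outer z w = outer x (outer w z *\<^sub>v y)"
    using assms by (simp add: outer_mult[OF outer_carrier[OF assms(2,3)]] transpose_outer)
  also have "outer w z *\<^sub>v y = (z \<bullet> y) \<cdot>\<^sub>v w" using assms by (simp add: outer_mult_vec)
  also have "z \<bullet> y = y \<bullet> z" using assms comm_scalar_prod by blast
  finally show ?thesis by (simp add: outer_smult_right)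
qed

lemma quad_form_outer_self: assumes "a \<in> carrier_vec n" "v \<in> carrier_vec n"
  shows "a \<bullet> (outer v v *\<^sub>v a) = (a \<bullet> v)^2"
proof -
  have "outer v v *\<^sub>v a = (v \<bullet> a) \<cdot>\<^sub>v v" using assms by (simp add: outer_mult_vec)
  moreover have "v \<bullet> a = a \<bullet> v" using assms comm_scalar_prod by blast
  ultimately show ?thesis using assms by (simp add: power2_eq_square)
qed

lemma quad_form_eq_frob_inner_outer: assumes A: "A \<in> carrier_mat n n" and x: "x \<in> carrier_vec n"
  shows "x \<bullet> (A *\<^sub>v x) = frob_inner A (outer x x)"
  unfolding quad_form_eq_bilin[OF A x] bilin_def frob_inner_def using A x
  by (simp, intro sum.cong refl, simp add: ac_simps)

lemma sym_mat_outer_self: "v \<in> carrier_vec n \<Longrightarrow> sym_mat n (outer v v)"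
  unfolding sym_mat_def by (simp add: outer_carrier transpose_outer)

declare minus_carrier_mat[simp]

lemma sum_sqrt_proots_linear_factors: "sum_mset (image_mset sqrt (proots (\<Prod>a\<leftarrow>ds. [:- a, 1:]))) = sum_list (map sqrt (ds :: real list))"
proof (induction ds)
  case Nil thus ?case by simp
next
  case (Cons d ds)
  have lin: "[:- a, 1:] \<noteq> (0 :: real poly)" for a by simp
  have nz: "(\<Prod>a\<leftarrow>ds. [:- a, 1:]) \<noteq> (0 :: real poly)"
    using lin by (auto simp: prod_list_zero_iff)
  have "(\<Prod>a\<leftarrow>d # ds. [:- a, 1:]) = [:- d, 1:] * (\<Prod>a\<leftarrow>ds. [:- a, 1:])" by simp
  hence "proots (\<Prod>a\<leftarrow>d # ds. [:- a, 1:]) = proots [:- d, 1:] + proots (\<Prod>a\<leftarrow>ds. [:- a, 1:])"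
    using proots_mult[OF lin nz] by simp
  also have "proots [:- d, 1:] = {#d#}" using proots_linear_factor[of "-d"] by simp
  finally show ?case using Cons by simp
qed

lemma sum_sqrt_proots_char_poly_upper_triangular: assumes E: "E \<in> carrier_mat n n" and ut: "upper_triangular E"
  shows "sum_mset (image_mset sqrt (proots (char_poly E))) = (\<Sum>i<n. sqrt (E$$(i,i)))"
proof -
  have "char_poly E = (\<Prod>a\<leftarrow>diag_mat E. [:- a, 1:])" by (rule char_poly_upper_triangular[OF E ut])
  hence "sum_mset (image_mset sqrt (proots (char_poly E))) = sum_list (map sqrt (diag_mat E))"
    using sum_sqrt_proots_linear_factors by simp
  also have "\<dots> = sum_list (map (\<lambda>i. sqrt (E$$(i,i))) [0..<n])" using E unfolding diag_mat_def by (simp add: o_def)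
  also have "\<dots> = (\<Sum>i<n. sqrt (E$$(i,i)))"
    by (simp add: sum_set_upt_conv_sum_list_nat[symmetric] atLeast0LessThan)
  finally show ?thesis .
qed

lemma nuclear_norm_similar_upper_triangular:
  assumes E: "E \<in> carrier_mat n n" "upper_triangular E" and sim: "similar_mat (transpose_mat X * X) E"
  shows "nuclear_norm X = (\<Sum>i<n. sqrt (E $$ (i,i)))"
  unfolding nuclear_norm_def singular_values_def char_poly_similar[OF sim]
  by (rule sum_sqrt_proots_char_poly_upper_triangular[OF E])

lemma householder_involution:
  assumes w: "w \<in> carrier_vec n" and ww: "w \<bullet> w \<noteq> (0::real)"
  shows "(1\<^sub>m n - (2 / (w \<bullet> w)) \<cdot>\<^sub>m outer w w) * (1\<^sub>m n - (2 / (w \<bullet> w)) \<cdot>\<^sub>m outer w w) = 1\<^sub>m n"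
proof -
  define c where "c = 2 / (w \<bullet> w)"
  define W where "W = outer w w"
  have W: "W \<in> carrier_mat n n" unfolding W_def using outer_carrier[OF w w] .
  have WW: "(c \<cdot>\<^sub>m W) * (c \<cdot>\<^sub>m W) = (2 * c) \<cdot>\<^sub>m W"
  proof -
    have "(c \<cdot>\<^sub>m W) * (c \<cdot>\<^sub>m W) = c \<cdot>\<^sub>m (c \<cdot>\<^sub>m ((w \<bullet> w) \<cdot>\<^sub>m W))"
      unfolding W_def outer_outer[OF w w w, symmetric]
      using W_def W by (simp add: mult_smult_assoc_mat[of _ n n] mult_smult_distrib[of _ n n])
    also have "\<dots> = (2 * c) \<cdot>\<^sub>m W" unfolding c_def using ww by (intro eq_matI) auto
    finally show ?thesis .
  qed
  have "(1\<^sub>m n - c \<cdot>\<^sub>m W) * (1\<^sub>m n - c \<cdot>\<^sub>m W)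
      = 1\<^sub>m n * (1\<^sub>m n - c \<cdot>\<^sub>m W) - (c \<cdot>\<^sub>m W) * (1\<^sub>m n - c \<cdot>\<^sub>m W)"
    using W by (intro minus_mult_distrib_mat[of _ n n]) auto
  also have "(c \<cdot>\<^sub>m W) * (1\<^sub>m n - c \<cdot>\<^sub>m W) = (c \<cdot>\<^sub>m W) * 1\<^sub>m n - (c \<cdot>\<^sub>m W) * (c \<cdot>\<^sub>m W)"
    using W by (intro mult_minus_distrib_mat[of _ n n]) auto
  also have "1\<^sub>m n * (1\<^sub>m n - c \<cdot>\<^sub>m W) - ((c \<cdot>\<^sub>m W) * 1\<^sub>m n - (c \<cdot>\<^sub>m W) * (c \<cdot>\<^sub>m W))
      = (1\<^sub>m n - c \<cdot>\<^sub>m W) - (c \<cdot>\<^sub>m W - (2 * c) \<cdot>\<^sub>m W)"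
    unfolding WW using W by simp
  also have "\<dots> = 1\<^sub>m n" using W by (intro eq_matI) auto
  finally show ?thesis unfolding c_def W_def .
qed

lemma householder_reflection:
  assumes u: "u \<in> carrier_vec n" and uu: "u \<bullet> u = (1::real)" and n: "0 < n"
  obtains Hh where "Hh \<in> carrier_mat n n" "Hh * Hh = 1\<^sub>m n" "transpose_mat Hh = Hh"
    "Hh *\<^sub>v unit_vec n 0 = u"
proof -
  define e where "e = (unit_vec n 0 :: real vec)"
  have e: "e \<in> carrier_vec n" unfolding e_def by simp
  define w where "w = e - u"
  have w: "w \<in> carrier_vec n" unfolding w_def using e u by simp
  show ?thesis
  proof (cases "w = 0\<^sub>v n")
    case True
    have "u = e"
    proof (rule eq_vecI)
      fix i assume "i < dim_vec e"
      hence "w $ i = 0" using True e by simp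
      thus "u $ i = e $ i" unfolding w_def using \<open>i < dim_vec e\<close> e u by simp
    qed (use e u in auto)
    thus ?thesis using that[of "1\<^sub>m n"] unfolding e_def by simp
  next
    case False
    have "e \<bullet> e = 1" "e \<bullet> u = u $ 0" "u \<bullet> e = u $ 0" unfolding e_def using n u by auto
    hence ww: "w \<bullet> w = 2 - 2 * u $ 0" and we: "w \<bullet> e = 1 - u $ 0"
      unfolding w_def using e u uu by (simp_all add: minus_scalar_prod_distrib scalar_prod_minus_distrib)
    have ww0: "w \<bullet> w \<noteq> 0" using scalar_prod_self_eq_0[OF w] False by auto
    define Hh where "Hh = 1\<^sub>m n - (2 / (w \<bullet> w)) \<cdot>\<^sub>m outer w w"
    have Hh: "Hh \<in> carrier_mat n n" unfolding Hh_def using outer_carrier[OF w w] by simp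
    have "Hh *\<^sub>v e = e - (2 / (w \<bullet> w)) \<cdot>\<^sub>v ((w \<bullet> e) \<cdot>\<^sub>v w)"
      unfolding Hh_def using e w outer_carrier[OF w w]
      by (simp add: minus_mult_distrib_mat_vec[of _ n n] smult_mat_mult_vec[of _ n n] outer_mult_vec)
    also have "(2 / (w \<bullet> w)) \<cdot>\<^sub>v ((w \<bullet> e) \<cdot>\<^sub>v w) = w"
      unfolding ww we using ww0[unfolded ww] by (intro eq_vecI) (auto simp: field_simps)
    also have "e - w = u" unfolding w_def using e u by (intro eq_vecI) auto
    finally have "Hh *\<^sub>v e = u" .
    moreover have "transpose_mat Hh = Hh" unfolding Hh_def by (rule eq_matI) (use w in auto)
    ultimately show ?thesis
      using that[OF Hh] householder_involution[OF w ww0] unfolding Hh_def e_def by simp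
  qed
qed

text \<open>A Householder reflection conjugates \<open>(v \<bullet> v) v v\<^sup>T\<close>, the Gram matrix of \<open>v v\<^sup>T\<close>, to
  \<open>(v \<bullet> v)\<^sup>2 e\<^sub>0 e\<^sub>0\<^sup>T\<close>.\<close>

lemma nuclear_norm_outer_self:
  assumes v: "v \<in> carrier_vec n"
  shows "nuclear_norm (outer v v) = v \<bullet> v"
proof (cases "v \<bullet> v = 0")
  case True
  hence "outer v v = 0\<^sub>m n n" using scalar_prod_self_eq_0[OF v] v by (intro eq_matI) auto
  hence "transpose_mat (outer v v) * outer v v = 0\<^sub>m n n" by simp
  hence "nuclear_norm (outer v v) = (\<Sum>i<n. sqrt (0\<^sub>m n n $$ (i,i)))"
    by (intro nuclear_norm_similar_upper_triangular)
      (auto simp: upper_triangular_def intro: similar_mat_refl[of _ n])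
  thus ?thesis using True by simp
next
  case False
  have pos: "v \<bullet> v > 0" using False v by (simp add: scalar_prod_def sum_nonneg order_le_neq_trans)
  have n: "0 < n" using pos v by (cases n) (auto simp: scalar_prod_def)
  define u where "u = (1 / sqrt (v \<bullet> v)) \<cdot>\<^sub>v v"
  have u: "u \<in> carrier_vec n" "u \<bullet> u = 1" unfolding u_def using v pos by auto
  obtain Hh where Hh: "Hh \<in> carrier_mat n n" "Hh * Hh = 1\<^sub>m n" "transpose_mat Hh = Hh"
    "Hh *\<^sub>v unit_vec n 0 = u" using householder_reflection[OF u n] by blast
  define e where "e = (unit_vec n 0 :: real vec)"
  have e: "e \<in> carrier_vec n" unfolding e_def by simp
  define E where "E = ((v \<bullet> v) * (v \<bullet> v)) \<cdot>\<^sub>m outer e e"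
  have E: "E \<in> carrier_mat n n" unfolding E_def using outer_carrier[OF e e] by simp
  have "transpose_mat (outer v v) * outer v v = ((v \<bullet> v) * (v \<bullet> v)) \<cdot>\<^sub>m outer u u"
    unfolding transpose_outer outer_outer[OF v v v] u_def using pos v
    by (intro eq_matI) (auto simp: field_simps)
  also have "outer u u = Hh * outer e e * Hh"
    using Hh e unfolding e_def by (simp add: mult_outer[of _ n n] outer_mult[of _ n n])
  also have "((v \<bullet> v) * (v \<bullet> v)) \<cdot>\<^sub>m (Hh * outer e e * Hh) = Hh * E * Hh"
    unfolding E_def using Hh(1) outer_carrier[OF e e]
    by (simp add: mult_smult_distrib[of _ n n] mult_smult_assoc_mat[of _ n n])
  finally have "similar_mat (transpose_mat (outer v v) * outer v v) E"
    unfolding similar_mat_def similar_mat_wit_def using Hh E outer_carrier[OF v v]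
    by (intro exI[of _ Hh]) (auto simp: Let_def)
  hence "nuclear_norm (outer v v) = (\<Sum>i<n. sqrt (E $$ (i,i)))"
    using E by (intro nuclear_norm_similar_upper_triangular)
      (auto simp: upper_triangular_def E_def e_def)
  also have "\<dots> = (\<Sum>i\<in>{0}. sqrt (E $$ (i,i)))"
    by (rule sum.mono_neutral_right) (use n in \<open>auto simp: E_def e_def\<close>)
  also have "\<dots> = v \<bullet> v" unfolding E_def e_def using n pos by (simp add: real_sqrt_mult)
  finally show ?thesis .
qed

section \<open>The tangent space\<close>

lemma complement_projector:
  fixes U :: "real mat"
  assumes U: "U \<in> carrier_mat n r" and UU: "transpose_mat U * U = 1\<^sub>m r"
  defines "Q \<equiv> 1\<^sub>m n - U * transpose_mat U"
  shows "Q \<in> carrier_mat n n" "transpose_mat Q = Q" "Q * Q = Q" "transpose_mat U * Q = 0\<^sub>m r n"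
proof -
  have d[simp]: "dim_row U = n" "dim_col U = r" using U by auto
  have UU': "transpose_mat U * (U * B) = B" if "dim_row B = r" for B
    using that by (simp add: assoc_mult_mat_dims[symmetric] UU)
  show Q: "Q \<in> carrier_mat n n" unfolding Q_def using U by simp
  show "transpose_mat Q = Q" unfolding Q_def by (simp add: mat_dims_simps)
  show "Q * Q = Q" unfolding Q_def by (simp add: mat_dims_simps UU', rule eq_matI, auto)
  show "transpose_mat U * Q = 0\<^sub>m r n" unfolding Q_def by (simp add: mat_dims_simps UU'[of "transpose_mat U", simplified], rule eq_matI, auto)
qed

lemma tangent_part_decomp:
  fixes U H :: "real mat"
  assumes U: "U \<in> carrier_mat n r" and UU: "transpose_mat U * U = 1\<^sub>m r"
    and H: "H \<in> carrier_mat n n" and HT: "transpose_mat H = H"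
  defines "Q \<equiv> 1\<^sub>m n - U * transpose_mat U"
  defines "Z \<equiv> H * U - (1/2) \<cdot>\<^sub>m (U * (transpose_mat U * H * U))"
  shows "H - Q * H * Q = U * transpose_mat Z + Z * transpose_mat U"
    "transpose_mat Z * U = (1/2) \<cdot>\<^sub>m (transpose_mat U * H * U)"
    "Z \<in> carrier_mat n r"
proof -
  have d[simp]: "dim_row U = n" "dim_col U = r" "dim_row H = n" "dim_col H = n" using U H by auto
  have UU': "transpose_mat U * (U * B) = B" if "dim_row B = r" for B
    using that by (simp add: assoc_mult_mat_dims[symmetric] UU)
  show "H - Q * H * Q = U * transpose_mat Z + Z * transpose_mat U"
    unfolding Q_def Z_def
    by (simp add: mat_dims_simps UU' UU HT)
      (rule eq_matI, simp_all del: index_mult_mat(1) add: index_mult_mat(2,3))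
  show "transpose_mat Z * U = (1/2) \<cdot>\<^sub>m (transpose_mat U * H * U)"
    unfolding Z_def by (simp add: mat_dims_simps UU' UU HT) (rule mat_minus_half)
  show "Z \<in> carrier_mat n r" unfolding Z_def by (intro minus_carrier_mat smult_carrier_mat carrier_matI) auto
qed

lemma frob_inner_sandwich:
  fixes Q A B :: "real mat"
  assumes Q: "Q \<in> carrier_mat n n" and QT: "transpose_mat Q = Q" and A: "A \<in> carrier_mat n n"
    and B: "B \<in> carrier_mat n n"
  shows "frob_inner (Q * A * Q) B = frob_inner A (Q * B * Q)"
proof -
  have "frob_inner (Q * A * Q) B = frob_inner (Q * (A * Q)) B" using Q A by simp
  also have "\<dots> = frob_inner (A * Q) (transpose_mat Q * B)" using Q A B by (intro frob_inner_mult_left, auto)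
  also have "\<dots> = frob_inner A (transpose_mat Q * B * transpose_mat Q)" using Q A B by (intro frob_inner_mult_right, auto)
  finally show ?thesis unfolding QT .
qed

lemma sandwich_idem:
  fixes Q A :: "real mat"
  assumes Q: "Q \<in> carrier_mat n n" and QQ: "Q * Q = Q" and A: "A \<in> carrier_mat n n"
  shows "Q * (Q * A * Q) * Q = Q * A * Q"
proof -
  have d[simp]: "dim_row Q = n" "dim_col Q = n" "dim_row A = n" "dim_col A = n" using Q A by auto
  have QQ': "Q * (Q * B) = Q * B" if "dim_row B = n" for B
    using that by (simp add: assoc_mult_mat_dims[symmetric] QQ)
  show ?thesis by (simp add: assoc_mult_mat_dims QQ QQ')
qed

lemma col_orthonormal_self:
  assumes U: "U \<in> carrier_mat n r" and UU: "transpose_mat U * U = 1\<^sub>m r" and k: "k < r"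
  shows "col U k \<bullet> col U k = 1"
proof -
  have "(transpose_mat U * U) $$ (k,k) = col U k \<bullet> col U k" using U k by simp
  thus ?thesis unfolding UU using k by simp
qed

lemma frob_inner_tangent_self:
  assumes U: "U \<in> carrier_mat n r" and UU: "transpose_mat U * U = 1\<^sub>m r" and Z: "Z \<in> carrier_mat n r"
    and C: "transpose_mat U * Z = transpose_mat Z * U"
  shows "frob_inner (U * transpose_mat Z + Z * transpose_mat U) (U * transpose_mat Z + Z * transpose_mat U)
    = 2 * frob_inner Z Z + 2 * frob_inner (transpose_mat Z * U) (transpose_mat Z * U)"
proof -
  have A: "U * transpose_mat Z \<in> carrier_mat n n" and B: "Z * transpose_mat U \<in> carrier_mat n n"
    using U Z by auto
  have ZU: "transpose_mat (Z * transpose_mat U) = U * transpose_mat Z"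
    using U Z by (simp add: transpose_mult[of _ n r])
  have "frob_inner (Z * transpose_mat U) (Z * transpose_mat U) = frob_inner Z Z"
    using frob_inner_transpose[OF B B] frob_inner_orthonormal_self[OF U UU Z] unfolding ZU by simp
  moreover have "frob_inner (U * transpose_mat Z) (Z * transpose_mat U)
      = frob_inner (transpose_mat Z * U) (transpose_mat Z * U)"
  proof -
    have "frob_inner (U * transpose_mat Z) (Z * transpose_mat U)
        = frob_inner (transpose_mat Z) (transpose_mat U * (Z * transpose_mat U))"
      using U Z B by (intro frob_inner_mult_left[of _ n r _ n]) auto
    also have "transpose_mat U * (Z * transpose_mat U) = (transpose_mat U * Z) * transpose_mat U"
      using U Z by (simp add: assoc_mult_mat[of _ r n _ r _ n])
    also have "frob_inner (transpose_mat Z) \<dots> = frob_inner \<dots> (transpose_mat Z)"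
      using U Z by (intro frob_inner_comm[of _ r n]) auto
    also have "\<dots> = frob_inner (transpose_mat U * Z) (transpose_mat Z * U)"
      using U Z by (subst frob_inner_mult_right[of _ r r _ n]) auto
    finally show ?thesis unfolding C .
  qed
  ultimately show ?thesis
    using A B frob_inner_orthonormal_self[OF U UU Z] frob_inner_comm[OF A B]
    by (simp add: frob_inner_add_left[of _ n n] frob_inner_add_right[of _ n n])
qed

section \<open>Quadratic measurements\<close>

lemma meas_diff: assumes "a i \<in> carrier_vec n" "A \<in> carrier_mat n n" "B \<in> carrier_mat n n"
  shows "meas a (A - B) i = meas a A i - meas a B i"
  unfolding meas_def using assms by (simp add: minus_mult_distrib_mat_vec[of _ n n] scalar_prod_minus_distrib)

lemma meas_add: assumes "a i \<in> carrier_vec n" "A \<in> carrier_mat n n" "B \<in> carrier_mat n n"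
  shows "meas a (A + B) i = meas a A i + meas a B i"
  unfolding meas_def using assms by (simp add: add_mult_distrib_mat_vec[of _ n n] scalar_prod_add_distrib[of _ n])

lemma frob_inner_meas_adj:
  assumes X: "X \<in> carrier_mat n n" and a: "\<forall>i<m. a i \<in> carrier_vec n"
  shows "frob_inner (meas_adj n m a \<mu>) X = (\<Sum>i<m. \<mu> i * meas a X i)"
proof -
  have "frob_inner (meas_adj n m a \<mu>) X = (\<Sum>j<n. \<Sum>k<n. (\<Sum>i<m. \<mu> i * (a i $ j) * (a i $ k)) * X$$(j,k))"
    unfolding frob_inner_def meas_adj_def by simp
  also have "\<dots> = (\<Sum>j<n. \<Sum>k<n. \<Sum>i<m. \<mu> i * ((a i $ j) * X$$(j,k) * (a i $ k)))"
    by (intro sum.cong refl, subst sum_distrib_right, intro sum.cong refl, simp)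
  also have "\<dots> = (\<Sum>j<n. \<Sum>i<m. \<Sum>k<n. \<mu> i * ((a i $ j) * X$$(j,k) * (a i $ k)))"
    by (rule sum.cong[OF refl], rule sum.swap)
  also have "\<dots> = (\<Sum>i<m. \<Sum>j<n. \<Sum>k<n. \<mu> i * ((a i $ j) * X$$(j,k) * (a i $ k)))"
    by (rule sum.swap)
  also have "\<dots> = (\<Sum>i<m. \<mu> i * meas a X i)"
  proof (intro sum.cong refl)
    fix i assume "i \<in> {..<m}"
    hence ai: "a i \<in> carrier_vec n" using a by auto
    have "meas a X i = bilin n (\<lambda>j k. X$$(j,k)) (\<lambda>j. a i $ j) (\<lambda>j. a i $ j)"
      unfolding meas_def using quad_form_eq_bilin[OF X ai] .
    thus "(\<Sum>j<n. \<Sum>k<n. \<mu> i * (a i $ j * X $$ (j, k) * a i $ k)) = \<mu> i * meas a X i"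
      unfolding bilin_def by (simp add: sum_distrib_left)
  qed
  finally show ?thesis .
qed

lemma meas_sq_sum_le:
  assumes I: "finite I" "card I > 0" and a: "\<forall>i\<in>I. a i \<in> carrier_vec n"
    and nuclear: "\<forall>X. sym_mat n X \<longrightarrow> meas_l1 a I X / real (card I) \<le> C * nuclear_norm X"
    and v: "v \<in> carrier_vec n"
  shows "(\<Sum>i\<in>I. (a i \<bullet> v)^2) \<le> C * real (card I) * (v \<bullet> v)"
proof -
  have "meas_l1 a I (outer v v) = (\<Sum>i\<in>I. (a i \<bullet> v)^2)"
    unfolding meas_l1_def meas_def using a v
    by (intro sum.cong refl, subst quad_form_outer_self[of _ n]) auto
  hence "(\<Sum>i\<in>I. (a i \<bullet> v)^2) / real (card I) \<le> C * (v \<bullet> v)"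
    using nuclear sym_mat_outer_self[OF v] nuclear_norm_outer_self[OF v] by metis
  thus ?thesis using I by (simp add: divide_le_eq mult.commute mult.left_commute)
qed

text \<open>The hypothesis says that \<open>K I - \<Sum>\<^sub>i a\<^sub>i a\<^sub>i\<^sup>T\<close> is positive semidefinite, so its
  Frobenius inner product with \<open>G\<close> is nonnegative.\<close>

lemma meas_sum_psd_le_trace:
  assumes G: "psd_mat n G" and a: "\<forall>i<m. a i \<in> carrier_vec n"
    and bound: "\<And>v. v \<in> carrier_vec n \<Longrightarrow> (\<Sum>i<m. (a i \<bullet> v)^2) \<le> K * (v \<bullet> v)"
  shows "(\<Sum>i<m. meas a G i) \<le> K * trace_mat G"
proof -
  have Gc: "G \<in> carrier_mat n n" using psd_mat_carrier[OF G] .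
  define M where "M = meas_adj n m a (\<lambda>_. 1)"
  have Mc: "M \<in> carrier_mat n n" unfolding M_def meas_adj_def by simp
  have MT: "transpose_mat M = M" unfolding M_def meas_adj_def by (rule eq_matI, auto simp: ac_simps)
  define B where "B = K \<cdot>\<^sub>m 1\<^sub>m n - M"
  have Bc: "B \<in> carrier_mat n n" unfolding B_def using Mc by simp
  have BT: "transpose_mat B = B" unfolding B_def using Mc MT
    by (simp add: transpose_minus[of _ n n] transpose_smult)
  have "v \<bullet> (B *\<^sub>v v) \<ge> 0" if v: "v \<in> carrier_vec n" for v
  proof -
    have "v \<bullet> (B *\<^sub>v v) = v \<bullet> ((K \<cdot>\<^sub>m 1\<^sub>m n) *\<^sub>v v) - v \<bullet> (M *\<^sub>v v)"
      unfolding B_def using Mc v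
      by (subst minus_mult_distrib_mat_vec[of _ n n],
          auto intro!: scalar_prod_minus_distrib[of _ n] mult_mat_vec_carrier[of _ n n])
    also have "(K \<cdot>\<^sub>m 1\<^sub>m n) *\<^sub>v v = K \<cdot>\<^sub>v v" using v by (simp add: smult_mat_mult_vec[of _ n n])
    also have "v \<bullet> (M *\<^sub>v v) = frob_inner M (outer v v)" by (rule quad_form_eq_frob_inner_outer[OF Mc v])
    also have "\<dots> = (\<Sum>i<m. (a i \<bullet> v)^2)"
      unfolding M_def using frob_inner_meas_adj[OF outer_carrier[OF v v] a, of "\<lambda>_. 1"] a v
      by (simp add: meas_def, intro sum.cong refl, subst quad_form_outer_self[of _ n], auto)
    finally show ?thesis using v bound[OF v] by simp
  qed
  hence "psd_mat n B" unfolding psd_mat_def sym_mat_def using Bc BT by auto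
  hence "frob_inner G B \<ge> 0" by (rule frob_inner_psd_nonneg[OF G])
  also have "frob_inner G B = K * frob_inner (1\<^sub>m n) G - frob_inner M G"
    unfolding B_def using Gc Mc
    by (simp add: frob_inner_minus_right[of _ n n] frob_inner_smult_right[of _ n n]
        frob_inner_comm[of G n n])
  also have "frob_inner M G = (\<Sum>i<m. meas a G i)"
    unfolding M_def using frob_inner_meas_adj[OF Gc a, of "\<lambda>_. 1"] by simp
  finally show ?thesis using frob_inner_one_left[OF Gc] by simp
qed

lemma meas_tangent:
  assumes U: "U \<in> carrier_mat n r" and Z: "Z \<in> carrier_mat n r" and a: "a i \<in> carrier_vec n"
  shows "meas a (U * transpose_mat Z + Z * transpose_mat U) i
       = 2 * (\<Sum>k<r. (col U k \<bullet> a i) * (col Z k \<bullet> a i))"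
proof -
  let ?x = "a i"
  have "meas a (U * transpose_mat Z + Z * transpose_mat U) i
     = ?x \<bullet> (U *\<^sub>v (transpose_mat Z *\<^sub>v ?x)) + ?x \<bullet> (Z *\<^sub>v (transpose_mat U *\<^sub>v ?x))"
    unfolding meas_def using U Z a
    by (simp add: add_mult_distrib_mat_vec[of _ n n] scalar_prod_add_distrib[of _ n] assoc_mult_mat_vec_dims)
  also have "?x \<bullet> (U *\<^sub>v (transpose_mat Z *\<^sub>v ?x)) = (transpose_mat U *\<^sub>v ?x) \<bullet> (transpose_mat Z *\<^sub>v ?x)"
    using U Z a by (simp add: transpose_vec_mult_scalar[of U n r])
  also have "?x \<bullet> (Z *\<^sub>v (transpose_mat U *\<^sub>v ?x)) = (transpose_mat Z *\<^sub>v ?x) \<bullet> (transpose_mat U *\<^sub>v ?x)"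
    using U Z a by (simp add: transpose_vec_mult_scalar[of Z n r])
  also have "(transpose_mat Z *\<^sub>v ?x) \<bullet> (transpose_mat U *\<^sub>v ?x) = (transpose_mat U *\<^sub>v ?x) \<bullet> (transpose_mat Z *\<^sub>v ?x)"
    using U Z a by (intro comm_scalar_prod[of _ r], auto)
  also have "(transpose_mat U *\<^sub>v ?x) \<bullet> (transpose_mat Z *\<^sub>v ?x) = (\<Sum>k<r. (col U k \<bullet> ?x) * (col Z k \<bullet> ?x))"
    using U Z a by (simp add: scalar_prod_def atLeast0LessThan)
  finally show ?thesis by simp
qed

lemma abs_mult_le_weighted_squares: "s > 0 \<Longrightarrow> 2 * \<bar>x * y\<bar> \<le> x^2 / s + s * y^2" for s x y :: real
proof -
  assume s: "s > 0"
  have "0 \<le> (\<bar>x\<bar> - s * \<bar>y\<bar>)^2 / s" using s by simp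
  also have "(\<bar>x\<bar> - s * \<bar>y\<bar>)^2 / s = x^2 / s + s * y^2 - 2 * \<bar>x * y\<bar>"
    using s by (simp add: power2_eq_square field_simps abs_mult)
  finally show ?thesis by simp
qed

lemma abs_meas_tangent_le:
  assumes U: "U \<in> carrier_mat n r" and Z: "Z \<in> carrier_mat n r" and a: "a i \<in> carrier_vec n"
    and s: "s > 0"
  shows "\<bar>meas a (U * transpose_mat Z + Z * transpose_mat U) i\<bar>
           \<le> (\<Sum>k<r. (a i \<bullet> col U k)^2 / s + s * (a i \<bullet> col Z k)^2)"
proof -
  have cols: "col U k \<bullet> a i = a i \<bullet> col U k" "col Z k \<bullet> a i = a i \<bullet> col Z k" for k
    using U Z a by (auto intro!: comm_scalar_prod[of _ n])
  have "\<bar>meas a (U * transpose_mat Z + Z * transpose_mat U) i\<bar>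
        = \<bar>2 * (\<Sum>k<r. (a i \<bullet> col U k) * (a i \<bullet> col Z k))\<bar>"
    using meas_tangent[OF U Z, of a i] a unfolding cols by simp
  also have "\<dots> \<le> (\<Sum>k<r. 2 * \<bar>(a i \<bullet> col U k) * (a i \<bullet> col Z k)\<bar>)"
    using sum_abs[of "\<lambda>k. (a i \<bullet> col U k) * (a i \<bullet> col Z k)" "{..<r}"]
    by (simp add: abs_mult sum_distrib_left[symmetric])
  also have "\<dots> \<le> (\<Sum>k<r. (a i \<bullet> col U k)^2 / s + s * (a i \<bullet> col Z k)^2)"
    by (intro sum_mono abs_mult_le_weighted_squares[OF s])
  finally show ?thesis .
qed

lemma meas_l1_tangent_le:
  assumes U: "U \<in> carrier_mat n r" and UU: "transpose_mat U * U = 1\<^sub>m r" and Z: "Z \<in> carrier_mat n r"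
    and a: "\<forall>i\<in>S. a i \<in> carrier_vec n"
    and bound: "\<And>v. v \<in> carrier_vec n \<Longrightarrow> (\<Sum>i\<in>S. (a i \<bullet> v)^2) \<le> K * (v \<bullet> v)"
    and s: "s > 0"
  shows "(\<Sum>i\<in>S. \<bar>meas a (U * transpose_mat Z + Z * transpose_mat U) i\<bar>) \<le> K * (real r / s + s * frob_inner Z Z)"
proof -
  have "(\<Sum>i\<in>S. \<bar>meas a (U * transpose_mat Z + Z * transpose_mat U) i\<bar>)
      \<le> (\<Sum>i\<in>S. \<Sum>k<r. (a i \<bullet> col U k)^2 / s + s * (a i \<bullet> col Z k)^2)"
    using abs_meas_tangent_le[OF U Z _ s] a by (intro sum_mono) auto
  also have "\<dots> = (\<Sum>k<r. (\<Sum>i\<in>S. (a i \<bullet> col U k)^2) / s + s * (\<Sum>i\<in>S. (a i \<bullet> col Z k)^2))"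
    by (subst sum.swap) (simp add: sum.distrib sum_divide_distrib sum_distrib_left)
  also have "\<dots> \<le> (\<Sum>k<r. K / s + s * (K * (col Z k \<bullet> col Z k)))"
  proof (intro sum_mono add_mono)
    fix k assume "k \<in> {..<r}"
    hence "col U k \<bullet> col U k = 1" using col_orthonormal_self[OF U UU] by simp
    moreover have "col U k \<in> carrier_vec n" "col Z k \<in> carrier_vec n"
      unfolding carrier_vec_def using U Z by auto
    ultimately show "(\<Sum>i\<in>S. (a i \<bullet> col U k)^2) / s \<le> K / s"
      and "s * (\<Sum>i\<in>S. (a i \<bullet> col Z k)^2) \<le> s * (K * (col Z k \<bullet> col Z k))"
      using bound[of "col U k"] bound[of "col Z k"] s by (simp_all add: divide_right_mono)
  qed
  also have "\<dots> = K * (real r / s + s * frob_inner Z Z)"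
    unfolding frob_inner_self_cols[OF Z] by (simp add: sum.distrib sum_distrib_left[symmetric] algebra_simps)
  finally show ?thesis .
qed

text \<open>Take \<open>s = \<surd>(2r) / \<parallel>D\<parallel>\<^sub>F\<close> in \<open>meas_l1_tangent_le\<close>; the symmetry of
  \<open>U\<^sup>T Z\<close> gives \<open>\<parallel>Z\<parallel>\<^sub>F\<^sup>2 \<le> \<parallel>D\<parallel>\<^sub>F\<^sup>2 / 2\<close>.\<close>

lemma meas_l1_tangent_le_frob_norm:
  assumes U: "U \<in> carrier_mat n r" and UU: "transpose_mat U * U = 1\<^sub>m r" and Z: "Z \<in> carrier_mat n r"
    and C: "transpose_mat U * Z = transpose_mat Z * U" and r: "0 < r" and K: "0 \<le> K"
    and a: "\<forall>i\<in>S. a i \<in> carrier_vec n"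
    and bound: "\<And>v. v \<in> carrier_vec n \<Longrightarrow> (\<Sum>i\<in>S. (a i \<bullet> v)^2) \<le> K * (v \<bullet> v)"
  shows "(\<Sum>i\<in>S. \<bar>meas a (U * transpose_mat Z + Z * transpose_mat U) i\<bar>)
           \<le> K * sqrt (2 * real r) * frob_norm (U * transpose_mat Z + Z * transpose_mat U)"
proof -
  define D where "D = U * transpose_mat Z + Z * transpose_mat U"
  define f where "f = frob_norm D"
  have f0: "f \<ge> 0" unfolding f_def frob_norm_eq_sqrt_frob_inner using frob_inner_self_nonneg by simp
  have ff: "f * f = frob_inner D D"
    unfolding f_def frob_norm_eq_sqrt_frob_inner using frob_inner_self_nonneg by simp
  have ZZ: "frob_inner Z Z \<le> f * f / 2"
    using frob_inner_tangent_self[OF U UU Z C] frob_inner_self_nonneg[of "transpose_mat Z * U"]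
    unfolding ff D_def by simp
  show ?thesis
  proof (cases "f = 0")
    case True
    have "D = 0\<^sub>m n n"
      using True ff frob_inner_self_eq_0[of D n n] U Z unfolding D_def by simp
    hence "meas a D i = 0" if "i \<in> S" for i
      using a that unfolding meas_def by (auto simp: scalar_prod_def)
    thus ?thesis using True unfolding D_def[symmetric] f_def by simp
  next
    case False
    define q where "q = sqrt (2 * real r)"
    have q: "q > 0" "q * q = 2 * real r" unfolding q_def using r by auto
    have s: "q / f > 0" using q False f0 by simp
    have "(\<Sum>i\<in>S. \<bar>meas a D i\<bar>) \<le> K * (real r / (q / f) + q / f * frob_inner Z Z)"
      unfolding D_def by (rule meas_l1_tangent_le[OF U UU Z a bound s])
    also have "\<dots> \<le> K * (real r / (q / f) + q / f * (f * f / 2))"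
      using ZZ K s by (intro mult_left_mono add_left_mono, auto)
    also have "real r / (q / f) + q / f * (f * f / 2) = q * f"
      using q False by (simp add: field_simps)
    finally show ?thesis unfolding D_def[symmetric] f_def q_def by (simp add: mult.assoc)
  qed
qed

section \<open>First-order optimality of an \<open>\<ell>\<^sub>1\<close> fit\<close>

definition abs_dir_deriv :: "real \<Rightarrow> real \<Rightarrow> real" where
  "abs_dir_deriv b x = (if b \<noteq> 0 then - sgn b * x else \<bar>x\<bar>)"

text \<open>\<open>abs_dir_deriv b x\<close> is the right derivative of \<open>t \<mapsto> \<bar>b - t x\<bar>\<close> at \<open>t = 0\<close>; by
  convexity it bounds the increment \<open>\<bar>b - x\<bar> - \<bar>b\<bar>\<close> from below.\<close>

lemma abs_add_abs_dir_deriv_le: "\<bar>b\<bar> + abs_dir_deriv b x \<le> \<bar>b - x\<bar>"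
  unfolding abs_dir_deriv_def by (cases "b > 0"; cases "b < 0"; auto simp: sgn_if)

lemma abs_dir_deriv_ge: "- \<bar>x\<bar> \<le> abs_dir_deriv b x"
  unfolding abs_dir_deriv_def by (cases "b > 0"; cases "b < 0"; auto simp: sgn_if)

lemma mult_ge_abs_dir_deriv:
  assumes "b \<noteq> 0 \<Longrightarrow> \<mu> = c * sgn b" and "b = 0 \<Longrightarrow> \<bar>\<mu>\<bar> \<le> c"
  shows "- c * abs_dir_deriv b x \<le> \<mu> * x"
proof (cases "b = 0")
  case True
  have "\<bar>\<mu>\<bar> * \<bar>x\<bar> \<le> c * \<bar>x\<bar>" using assms(2) True by (intro mult_right_mono, auto)
  moreover have "- (\<bar>\<mu>\<bar> * \<bar>x\<bar>) \<le> \<mu> * x" by (simp add: abs_mult[symmetric])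
  ultimately show ?thesis unfolding abs_dir_deriv_def using True by simp
qed (use assms(1) in \<open>simp add: abs_dir_deriv_def\<close>)

lemma sum_abs_dir_deriv_le:
  assumes "(\<Sum>i\<in>I. \<bar>b i - x i + w i\<bar>) \<le> (\<Sum>i\<in>I. \<bar>b i + w i\<bar>)"
  shows "(\<Sum>i\<in>I. abs_dir_deriv (b i) (x i)) \<le> 2 * (\<Sum>i\<in>I. \<bar>w i\<bar>)"
proof -
  have "(\<Sum>i\<in>I. \<bar>b i\<bar> + abs_dir_deriv (b i) (x i) - \<bar>w i\<bar>) \<le> (\<Sum>i\<in>I. \<bar>b i - x i + w i\<bar>)"
    using abs_add_abs_dir_deriv_le[of "b _" "x _"] by (intro sum_mono) (smt (verit))
  also have "\<dots> \<le> (\<Sum>i\<in>I. \<bar>b i\<bar> + \<bar>w i\<bar>)"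
    using assms by (smt (verit, best) abs_triangle_ineq sum_mono)
  finally show ?thesis by (simp add: sum.distrib sum_subtractf)
qed

section \<open>The recovery estimate\<close>

locale l1_recovery =
  fixes n r m :: nat and U \<Lambda> X0 Xhat :: "real mat" and a :: "nat \<Rightarrow> real vec"
    and \<beta> w z \<mu> :: "nat \<Rightarrow> real" and \<epsilon> s0 :: real and S :: "nat set"
  assumes X0_psd: "psd_mat n X0" and r_pos: "0 < r"
    and U_carrier: "U \<in> carrier_mat n r" and U_orthonormal: "transpose_mat U * U = 1\<^sub>m r"
    and \<Lambda>_carrier: "\<Lambda> \<in> carrier_mat r r" and X0_eq: "X0 = U * \<Lambda> * transpose_mat U"
    and a_carrier: "\<forall>i<m. a i \<in> carrier_vec n"
    and z_eq: "\<forall>i<m. z i = meas a X0 i + \<beta> i + w i"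
    and w_l1: "(\<Sum>i<m. \<bar>w i\<bar>) \<le> \<epsilon>"
    and Xhat_psd: "psd_mat n Xhat"
    and Xhat_min: "\<forall>X. psd_mat n X \<longrightarrow>
        (\<Sum>i<m. \<bar>z i - meas a Xhat i\<bar>) \<le> (\<Sum>i<m. \<bar>z i - meas a X i\<bar>)"
    and s0_pos: "0 < s0" and s0_less_1: "s0 < 1"
    and S_subset: "S \<subseteq> {..<m}"
    and card_S: "real (card S) / real m = s0 / (13 * sqrt (2 * real r))"
    and \<beta>_support: "\<forall>i<m. \<beta> i \<noteq> 0 \<longrightarrow> i \<in> S"
    and nuclear_upper: "\<forall>X. sym_mat n X \<longrightarrow>
        meas_l1 a {..<m} X / real m \<le> (1 + 1/10) * nuclear_norm X"
    and nuclear_upper_S: "\<forall>X. sym_mat n X \<longrightarrow>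
        meas_l1 a S X / real (card S) \<le> (1 + 1/10) * nuclear_norm X"
    and tangent_lower: "\<forall>X \<in> tangent_space n r U. X \<noteq> 0\<^sub>m n n \<longrightarrow>
        meas_l1 a ({..<m} - S) X / real (card ({..<m} - S)) > (1/5) * (1 - 1/12) * frob_norm X"
    and certificate_Tperp: "loewner_le n (proj_Tperp n U (meas_adj n m a \<mu>))
        (- (1 / real r) \<cdot>\<^sub>m proj_Tperp n U (1\<^sub>m n))"
    and certificate_T: "frob_norm (proj_T n U (meas_adj n m a \<mu>)) \<le> 1 / (13 * real r)"
    and \<mu>_support: "\<forall>i<m. \<beta> i \<noteq> 0 \<longrightarrow> \<mu> i = 9 / real m * sgn (\<beta> i)"
    and \<mu>_off_support: "\<forall>i<m. \<beta> i = 0 \<longrightarrow> \<bar>\<mu> i\<bar> \<le> 9 / real m"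
begin

definition Pperp :: "real mat" where "Pperp = 1\<^sub>m n - U * transpose_mat U"
definition H :: "real mat" where "H = Xhat - X0"
abbreviation H_T :: "real mat" where "H_T \<equiv> proj_T n U H"
abbreviation H_Tperp :: "real mat" where "H_Tperp \<equiv> proj_Tperp n U H"
abbreviation Y :: "real mat" where "Y \<equiv> meas_adj n m a \<mu>"

lemma m_pos: "0 < m"
  using card_S s0_pos r_pos by (cases m) auto

lemma finite_S: "finite S"
  using S_subset finite_subset by blast

lemma card_S_sqrt: "real (card S) * sqrt (2 * real r) = real m * s0 / 13"
  using card_S m_pos r_pos by (simp add: field_simps)

lemma card_S_small: "real (card S) \<le> 544 / 10000 * real m"
proof -
  have "1.4142 \<le> sqrt 2" by (rule real_le_rsqrt) (simp add: power2_eq_square)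
  also have "\<dots> \<le> sqrt (2 * real r)" using r_pos by simp
  finally have "real (card S) * 1.4142 \<le> real m * s0 / 13"
    by (metis card_S_sqrt mult_left_mono of_nat_0_le_iff)
  moreover have "real m * s0 \<le> real m" using s0_less_1 by (intro mult_left_le) auto
  ultimately show ?thesis by simp
qed

lemma card_S_pos: "0 < card S"
  using card_S s0_pos r_pos m_pos by (cases "card S") auto

lemma card_compl_S: "real (card ({..<m} - S)) = real m - real (card S)"
proof -
  have "card S \<le> m" using card_mono[OF _ S_subset] by simp
  thus ?thesis using S_subset finite_S by (simp add: card_Diff_subset of_nat_diff)
qed

lemma \<epsilon>_nonneg: "0 \<le> \<epsilon>"
  using w_l1 sum_nonneg[of "{..<m}" "\<lambda>i. \<bar>w i\<bar>"] by linarith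

lemma Pperp: "Pperp \<in> carrier_mat n n" "transpose_mat Pperp = Pperp" "Pperp * Pperp = Pperp"
  "transpose_mat U * Pperp = 0\<^sub>m r n"
  using complement_projector[OF U_carrier U_orthonormal] unfolding Pperp_def by auto

lemma proj_Tperp_eq: "proj_Tperp n U A = Pperp * A * Pperp"
  unfolding proj_Tperp_def Pperp_def ..

lemma proj_carrier:
  assumes "A \<in> carrier_mat n n"
  shows "proj_Tperp n U A \<in> carrier_mat n n" "proj_T n U A \<in> carrier_mat n n"
  using assms Pperp(1) unfolding proj_T_def proj_Tperp_eq by auto

lemma Y_carrier: "Y \<in> carrier_mat n n"
  unfolding meas_adj_def by simp

lemma H_carrier: "H \<in> carrier_mat n n" and H_sym: "transpose_mat H = H"
  using Xhat_psd X0_psd unfolding H_def psd_mat_def sym_mat_def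
  by (auto simp: transpose_minus[of _ n n])

text \<open>Since \<open>X0\<close> lives on the column space of \<open>U\<close>, \<open>H_Tperp\<close> only sees \<open>Xhat\<close>.\<close>

lemma H_Tperp_psd: "psd_mat n H_Tperp"
proof -
  have X0c: "X0 \<in> carrier_mat n n" and Xc: "Xhat \<in> carrier_mat n n"
    using psd_mat_carrier X0_psd Xhat_psd by auto
  have "X0 * Pperp = U * \<Lambda> * (transpose_mat U * Pperp)"
    unfolding X0_eq using U_carrier \<Lambda>_carrier Pperp by (simp add: assoc_mult_mat_dims)
  also have "\<dots> = 0\<^sub>m n n" using Pperp U_carrier \<Lambda>_carrier by simp
  finally have "X0 * Pperp = 0\<^sub>m n n" .
  hence HP: "H * Pperp = Xhat * Pperp"
    unfolding H_def using Xc X0c Pperp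
    by (simp add: minus_mult_distrib_mat[of _ n n]) (intro eq_matI, auto)
  have "H_Tperp = Pperp * (H * Pperp)" unfolding proj_Tperp_eq using Pperp H_carrier by simp
  also have "\<dots> = Pperp * Xhat * Pperp" unfolding HP using Pperp Xc by simp
  finally have "H_Tperp = Pperp * Xhat * Pperp" .
  thus ?thesis using psd_mat_sandwich[OF Pperp(1,2) Xhat_psd] by simp
qed

lemma H_Tperp_carrier: "H_Tperp \<in> carrier_mat n n"
  using psd_mat_carrier[OF H_Tperp_psd] .

lemma H_T_carrier: "H_T \<in> carrier_mat n n"
  unfolding proj_T_def using H_carrier H_Tperp_carrier by simp

lemma H_split: "H = H_T + H_Tperp"
  unfolding proj_T_def using H_carrier H_Tperp_carrier by (intro eq_matI, auto)

lemma H_T_tangent: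
  obtains Z where "Z \<in> carrier_mat n r" "H_T = U * transpose_mat Z + Z * transpose_mat U"
    "transpose_mat U * Z = transpose_mat Z * U"
proof -
  define Z where "Z = H * U - (1/2) \<cdot>\<^sub>m (U * (transpose_mat U * H * U))"
  note td = tangent_part_decomp[OF U_carrier U_orthonormal H_carrier H_sym, folded Pperp_def Z_def]
  have "transpose_mat U * Z = transpose_mat (transpose_mat Z * U)"
    using U_carrier td(3) by (simp add: transpose_mult[of _ r n])
  also have "\<dots> = transpose_mat Z * U"
    unfolding td(2) using U_carrier H_carrier by (simp add: mat_dims_simps H_sym)
  finally show ?thesis using that td unfolding proj_T_def proj_Tperp_eq by simp
qed

lemma sum_abs_dir_deriv_meas_H_le: "(\<Sum>i<m. abs_dir_deriv (\<beta> i) (meas a H i)) \<le> 2 * \<epsilon>"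
proof -
  have H: "meas a H i = meas a Xhat i - meas a X0 i" if "i < m" for i
    unfolding H_def using a_carrier that Xhat_psd X0_psd
    by (intro meas_diff) (auto intro: psd_mat_carrier)
  have "(\<Sum>i<m. \<bar>\<beta> i - meas a H i + w i\<bar>) = (\<Sum>i<m. \<bar>z i - meas a Xhat i\<bar>)"
    using z_eq H by (intro sum.cong) auto
  also have "\<dots> \<le> (\<Sum>i<m. \<bar>z i - meas a X0 i\<bar>)" using Xhat_min X0_psd by blast
  also have "\<dots> = (\<Sum>i<m. \<bar>\<beta> i + w i\<bar>)" using z_eq by (intro sum.cong) auto
  finally have "(\<Sum>i<m. \<bar>\<beta> i - meas a H i + w i\<bar>) \<le> (\<Sum>i<m. \<bar>\<beta> i + w i\<bar>)" .
  hence "(\<Sum>i<m. abs_dir_deriv (\<beta> i) (meas a H i)) \<le> 2 * (\<Sum>i<m. \<bar>w i\<bar>)"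
    by (rule sum_abs_dir_deriv_le)
  thus ?thesis using w_l1 by simp
qed

lemma certificate_inner_H_ge: "- (18 * \<epsilon> / real m) \<le> frob_inner Y H"
proof -
  have "- (9 / real m) * (\<Sum>i<m. abs_dir_deriv (\<beta> i) (meas a H i)) \<le> (\<Sum>i<m. \<mu> i * meas a H i)"
    unfolding sum_distrib_left
    by (intro sum_mono mult_ge_abs_dir_deriv) (use \<mu>_support \<mu>_off_support in auto)
  moreover have "- (9 / real m) * (2 * \<epsilon>) \<le> - (9 / real m) * (\<Sum>i<m. abs_dir_deriv (\<beta> i) (meas a H i))"
    using sum_abs_dir_deriv_meas_H_le m_pos by (intro mult_left_mono_neg) auto
  ultimately show ?thesis using frob_inner_meas_adj[OF H_carrier a_carrier] by simp
qed

lemma certificate_inner_H_split: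
  "frob_inner Y H = frob_inner (proj_T n U Y) H_T + frob_inner (proj_Tperp n U Y) H_Tperp"
proof -
  have Yc: "Y \<in> carrier_mat n n" unfolding meas_adj_def by simp
  have PY: "proj_Tperp n U Y \<in> carrier_mat n n" using Yc Pperp unfolding proj_Tperp_eq by simp
  have "frob_inner (proj_Tperp n U Y) H = frob_inner Y H_Tperp"
    and "frob_inner (proj_Tperp n U Y) H_Tperp = frob_inner Y H_Tperp"
    unfolding proj_Tperp_eq
    using frob_inner_sandwich[OF Pperp(1,2) Yc] sandwich_idem[OF Pperp(1,3) H_carrier]
      H_carrier H_Tperp_carrier[unfolded proj_Tperp_eq] by auto
  thus ?thesis unfolding proj_T_def using Yc PY H_carrier H_Tperp_carrier
    by (simp add: frob_inner_minus_left[of _ n n] frob_inner_minus_right[of _ n n])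
qed

lemma certificate_T_inner: "frob_inner (proj_T n U Y) H_T \<le> frob_norm H_T / (13 * real r)"
proof -
  have "frob_inner (proj_T n U Y) H_T \<le> frob_norm (proj_T n U Y) * frob_norm H_T"
    by (rule frob_inner_le_frob_norm_mult[OF proj_carrier(2)[OF Y_carrier] H_T_carrier])
  also have "\<dots> \<le> 1 / (13 * real r) * frob_norm H_T"
    using certificate_T frob_inner_self_nonneg
    by (intro mult_right_mono) (auto simp: frob_norm_eq_sqrt_frob_inner)
  finally show ?thesis by simp
qed

lemma certificate_Tperp_inner: "frob_inner (proj_Tperp n U Y) H_Tperp \<le> - trace_mat H_Tperp / real r"
proof -
  have Yc: "Y \<in> carrier_mat n n" unfolding meas_adj_def by simp
  have PY: "proj_Tperp n U Y \<in> carrier_mat n n" using Yc Pperp unfolding proj_Tperp_eq by simp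
  have P1: "proj_Tperp n U (1\<^sub>m n) = Pperp" unfolding proj_Tperp_eq using Pperp by simp
  have "0 \<le> frob_inner H_Tperp ((- (1 / real r)) \<cdot>\<^sub>m Pperp - proj_Tperp n U Y)"
    using certificate_Tperp unfolding loewner_le_def P1
    by (rule frob_inner_psd_nonneg[OF H_Tperp_psd])
  also have "\<dots> = - (1 / real r) * frob_inner H_Tperp Pperp - frob_inner (proj_Tperp n U Y) H_Tperp"
    using H_Tperp_carrier Pperp PY
    by (simp add: frob_inner_minus_right[of _ n n] frob_inner_smult_right[of _ n n]
        frob_inner_comm[of H_Tperp n n])
  also have "frob_inner H_Tperp Pperp = trace_mat H_Tperp"
  proof -
    have "frob_inner H_Tperp Pperp = frob_inner (Pperp * 1\<^sub>m n * Pperp) H_Tperp"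
      using H_Tperp_carrier Pperp by (simp add: frob_inner_comm[of H_Tperp n n])
    also have "\<dots> = frob_inner (1\<^sub>m n) (Pperp * H_Tperp * Pperp)"
      by (rule frob_inner_sandwich[OF Pperp(1,2) _ H_Tperp_carrier], simp)
    also have "Pperp * H_Tperp * Pperp = H_Tperp"
      unfolding proj_Tperp_eq by (rule sandwich_idem[OF Pperp(1,3) H_carrier])
    finally show ?thesis using frob_inner_one_left[OF H_Tperp_carrier] by simp
  qed
  finally show ?thesis by simp
qed

lemma trace_H_Tperp_le: "trace_mat H_Tperp \<le> frob_norm H_T / 13 + 18 * real r * \<epsilon> / real m"
proof -
  have "trace_mat H_Tperp / real r \<le> frob_norm H_T / (13 * real r) + 18 * \<epsilon> / real m"
    using certificate_inner_H_ge certificate_inner_H_split certificate_T_inner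
      certificate_Tperp_inner by linarith
  thus ?thesis using r_pos m_pos by (simp add: field_simps)
qed

lemma meas_sq_sum_le_all:
  assumes "v \<in> carrier_vec n"
  shows "(\<Sum>i<m. (a i \<bullet> v)^2) \<le> 11/10 * real m * (v \<bullet> v)"
proof -
  have "0 < card {..<m}" "\<forall>i\<in>{..<m}. a i \<in> carrier_vec n"
    "\<forall>X. sym_mat n X \<longrightarrow> meas_l1 a {..<m} X / real (card {..<m}) \<le> (1 + 1/10) * nuclear_norm X"
    using a_carrier m_pos nuclear_upper by auto
  from meas_sq_sum_le[OF _ this assms] show ?thesis by simp
qed

lemma meas_sq_sum_le_S:
  assumes "v \<in> carrier_vec n"
  shows "(\<Sum>i\<in>S. (a i \<bullet> v)^2) \<le> 11/10 * real (card S) * (v \<bullet> v)"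
proof -
  have "\<forall>i\<in>S. a i \<in> carrier_vec n" using a_carrier S_subset by auto
  from meas_sq_sum_le[OF finite_S card_S_pos this nuclear_upper_S assms] show ?thesis by simp
qed

lemma meas_H_Tperp_sum_le: "(\<Sum>i<m. meas a H_Tperp i) \<le> 11/10 * real m * trace_mat H_Tperp"
  by (rule meas_sum_psd_le_trace[OF H_Tperp_psd a_carrier meas_sq_sum_le_all])

lemma meas_H_T_S_le: "(\<Sum>i\<in>S. \<bar>meas a H_T i\<bar>) \<le> 11/10 * real m * s0 / 13 * frob_norm H_T"
proof -
  obtain Z where Z: "Z \<in> carrier_mat n r" "H_T = U * transpose_mat Z + Z * transpose_mat U"
    "transpose_mat U * Z = transpose_mat Z * U" by (rule H_T_tangent)
  have "(\<Sum>i\<in>S. \<bar>meas a H_T i\<bar>) \<le> 11/10 * real (card S) * sqrt (2 * real r) * frob_norm H_T"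
    unfolding Z(2)
    by (rule meas_l1_tangent_le_frob_norm[OF U_carrier U_orthonormal Z(1,3) r_pos _ _ meas_sq_sum_le_S])
      (use a_carrier S_subset in auto)
  thus ?thesis using card_S_sqrt by (simp add: mult.assoc)
qed

lemma meas_H_T_compl_ge:
  "11/60 * real (card ({..<m} - S)) * frob_norm H_T \<le> (\<Sum>i\<in>{..<m} - S. \<bar>meas a H_T i\<bar>)"
proof (cases "H_T = 0\<^sub>m n n")
  case True
  thus ?thesis unfolding frob_norm_def by simp
next
  case False
  obtain Z where "Z \<in> carrier_mat n r" "H_T = U * transpose_mat Z + Z * transpose_mat U"
    by (rule H_T_tangent)
  hence "H_T \<in> tangent_space n r U" unfolding tangent_space_def by blast
  hence "meas_l1 a ({..<m} - S) H_T / real (card ({..<m} - S)) > 11/60 * frob_norm H_T"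
    using tangent_lower False by simp
  moreover have "card ({..<m} - S) > 0" using card_compl_S card_S_small m_pos by simp
  ultimately show ?thesis unfolding meas_l1_def by (simp add: field_simps)
qed

text \<open>Outside \<open>S\<close> there is no outlier, so there the directional derivatives are \<open>\<bar>meas a H i\<bar>\<close>;
  on \<open>S\<close> they are at least \<open>- \<bar>meas a H i\<bar>\<close>, and \<open>meas a H_Tperp i \<ge> 0\<close>.\<close>

lemma meas_H_T_compl_le:
  "(\<Sum>i\<in>{..<m} - S. \<bar>meas a H_T i\<bar>)
     \<le> 2 * \<epsilon> + (\<Sum>i\<in>S. \<bar>meas a H_T i\<bar>) + (\<Sum>i<m. meas a H_Tperp i)"
proof -
  let ?R = "{..<m} - S"
  have split: "(\<Sum>i<m. f i) = (\<Sum>i\<in>?R. f i) + (\<Sum>i\<in>S. f i)" for f :: "nat \<Rightarrow> real"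
    using sum.subset_diff[OF S_subset] by simp
  have meas_H: "meas a H i = meas a H_T i + meas a H_Tperp i" and perp: "0 \<le> meas a H_Tperp i"
    if "i < m" for i
    using meas_add[of a i n H_T H_Tperp] a_carrier that H_T_carrier H_Tperp_carrier
      H_Tperp_psd H_split unfolding psd_mat_def meas_def by auto
  have "(\<Sum>i\<in>?R. \<bar>meas a H i\<bar>) = (\<Sum>i\<in>?R. abs_dir_deriv (\<beta> i) (meas a H i))"
    using \<beta>_support by (intro sum.cong) (auto simp: abs_dir_deriv_def)
  moreover have "- (\<Sum>i\<in>S. \<bar>meas a H i\<bar>) \<le> (\<Sum>i\<in>S. abs_dir_deriv (\<beta> i) (meas a H i))"
    unfolding sum_negf[symmetric] by (intro sum_mono abs_dir_deriv_ge)
  ultimately have "(\<Sum>i\<in>?R. \<bar>meas a H i\<bar>) - (\<Sum>i\<in>S. \<bar>meas a H i\<bar>) \<le> 2 * \<epsilon>"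
    using sum_abs_dir_deriv_meas_H_le split[of "\<lambda>i. abs_dir_deriv (\<beta> i) (meas a H i)"] by linarith
  moreover have "\<bar>meas a H_T i\<bar> \<le> \<bar>meas a H i\<bar> + meas a H_Tperp i"
    and "\<bar>meas a H i\<bar> \<le> \<bar>meas a H_T i\<bar> + meas a H_Tperp i" if "i < m" for i
    using meas_H[OF that] perp[OF that] by arith+
  hence "(\<Sum>i\<in>?R. \<bar>meas a H_T i\<bar>) \<le> (\<Sum>i\<in>?R. \<bar>meas a H i\<bar> + meas a H_Tperp i)"
    and "(\<Sum>i\<in>S. \<bar>meas a H i\<bar>) \<le> (\<Sum>i\<in>S. \<bar>meas a H_T i\<bar> + meas a H_Tperp i)"
    using S_subset by (auto intro!: sum_mono)
  ultimately show ?thesis using split[of "meas a H_Tperp"] by (simp add: sum.distrib)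
qed

lemma frob_norm_error_le: "frob_norm (Xhat - X0) \<le> 12000 * (real r * \<epsilon> / real m)"
proof -
  define f where "f = frob_norm H_T"
  define t where "t = trace_mat H_Tperp"
  define F where "F = real m * f"
  define T where "T = real m * t"
  have f0: "0 \<le> f" unfolding f_def frob_norm_eq_sqrt_frob_inner using frob_inner_self_nonneg by simp
  have "11/60 * (real m - real (card S)) * f \<le> 2 * \<epsilon> + 11/10 * real m * s0 / 13 * f + 11/10 * real m * t"
    using meas_H_T_compl_ge meas_H_T_compl_le meas_H_T_S_le meas_H_Tperp_sum_le
    unfolding card_compl_S f_def t_def by linarith
  moreover have "11/60 * (real m - real (card S)) * f = 11/60 * F - 11/60 * (real (card S) * f)"
    and "11/10 * real m * s0 / 13 * f = 11/130 * (s0 * F)" and "11/10 * real m * t = 11/10 * T"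
    unfolding F_def T_def by (simp_all add: field_simps)
  ultimately have "11/60 * F - 11/60 * (real (card S) * f) \<le> 2 * \<epsilon> + 11/130 * (s0 * F) + 11/10 * T"
    by (simp only:)
  moreover have "real (card S) * f \<le> 544 / 10000 * F"
    using mult_right_mono[OF card_S_small f0] unfolding F_def by simp
  moreover have "s0 * F \<le> F"
    unfolding F_def using s0_pos s0_less_1 f0 by (intro mult_left_le_one_le) auto
  moreover have "T \<le> F / 13 + 18 * (real r * \<epsilon>)"
  proof -
    have "T \<le> real m * (f / 13 + 18 * real r * \<epsilon> / real m)"
      using trace_H_Tperp_le unfolding T_def f_def t_def by (intro mult_left_mono) auto
    also have "\<dots> = F / 13 + 18 * (real r * \<epsilon>)" using m_pos unfolding F_def by (simp add: field_simps)
    finally show ?thesis .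
  qed
  moreover have "\<epsilon> \<le> real r * \<epsilon>" and "0 \<le> real r * \<epsilon>"
    using r_pos \<epsilon>_nonneg by (simp_all add: mult_le_cancel_right1)
  ultimately have "2 * F + 2 * T \<le> 12000 * (real r * \<epsilon>)" by linarith
  hence "2 * f + 2 * t \<le> 12000 * (real r * \<epsilon> / real m)"
    using m_pos unfolding F_def T_def by (simp add: field_simps)
  moreover have "frob_norm H \<le> 2 * f + 2 * t"
    unfolding f_def t_def by (subst H_split, rule frob_norm_add_psd_le[OF H_T_carrier H_Tperp_psd])
  ultimately show ?thesis unfolding H_def by simp
qed

end

theorem lemma1:
  "\<exists>c::real. \<forall>(n::nat) (r::nat) (m::nat) (X0::real mat) (U::real mat) (\<Lambda>::real mat)
      (a::nat \<Rightarrow> real vec) (\<beta>::nat \<Rightarrow> real) (w::nat \<Rightarrow> real) (z::nat \<Rightarrow> real)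
      (\<epsilon>::real) (Xhat::real mat) (s0::real) (S::nat set) (\<mu>::nat \<Rightarrow> real).
    psd_mat n X0 \<and> 0 < r \<and>
    U \<in> carrier_mat n r \<and> transpose_mat U * U = 1\<^sub>m r \<and>
    \<Lambda> \<in> carrier_mat r r \<and> (\<forall>i<r. \<forall>j<r. i \<noteq> j \<longrightarrow> \<Lambda> $$ (i,j) = 0) \<and>
    (\<forall>i<r. \<Lambda> $$ (i,i) > 0) \<and>
    X0 = U * \<Lambda> * transpose_mat U \<and>
    (\<forall>i<m. a i \<in> carrier_vec n) \<and>
    (\<forall>i<m. z i = meas a X0 i + \<beta> i + w i) \<and>
    (\<Sum>i<m. \<bar>w i\<bar>) \<le> \<epsilon> \<and>
    psd_mat n Xhat \<and>
    (\<forall>X. psd_mat n X \<longrightarrow>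
        (\<Sum>i<m. \<bar>z i - meas a Xhat i\<bar>) \<le> (\<Sum>i<m. \<bar>z i - meas a X i\<bar>)) \<and>
    0 < s0 \<and> s0 < 1 \<and>
    S \<subseteq> {..<m} \<and>
    real (card S) / real m = s0 / (13 * sqrt (2 * real r)) \<and>
    (\<forall>i<m. \<beta> i \<noteq> 0 \<longrightarrow> i \<in> S) \<and>
    (\<forall>X. sym_mat n X \<longrightarrow>
        meas_l1 a {..<m} X / real m \<le> (1 + 1/10) * nuclear_norm X) \<and>
    (\<forall>X. sym_mat n X \<longrightarrow>
        meas_l1 a S X / real (card S) \<le> (1 + 1/10) * nuclear_norm X) \<and>
    (\<forall>X \<in> tangent_space n r U. X \<noteq> 0\<^sub>m n n \<longrightarrow>
        meas_l1 a ({..<m} - S) X / real (card ({..<m} - S))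
          > (1/5) * (1 - 1/12) * frob_norm X) \<and>
    loewner_le n (proj_Tperp n U (meas_adj n m a \<mu>))
                 (- (1 / real r) \<cdot>\<^sub>m proj_Tperp n U (1\<^sub>m n)) \<and>
    frob_norm (proj_T n U (meas_adj n m a \<mu>)) \<le> 1 / (13 * real r) \<and>
    (\<forall>i<m. \<beta> i \<noteq> 0 \<longrightarrow> \<mu> i = 9 / real m * sgn (\<beta> i)) \<and>
    (\<forall>i<m. \<beta> i = 0 \<longrightarrow> \<bar>\<mu> i\<bar> \<le> 9 / real m)
    \<longrightarrow> frob_norm (Xhat - X0) \<le> c * (real r * \<epsilon> / real m)"
  by (intro exI[of _ 12000] allI impI, elim conjE,
      rule l1_recovery.frob_norm_error_le[OF l1_recovery.intro]; assumption)

end
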